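(* For a plane forest $\overline{\mathcal F}$ with $n$ vertices, let $\iota(\overline{\mathcal F})$ be the ordered forest obtained by numbering its vertices $1,\dots,n$ in order of first visit in a left depth-first (preorder) traversal of the trees from left to right. Then the linear map $\iota:\mathbf H_{NCK}\to\mathbf H_o$ is an injective morphism of Hopf algebras (equivalently, $\overline{\mathcal F}\mapsto S^{\iota(\overline{\mathcal F})}$ is a Hopf embedding of $\mathbf H_{NCK}$ into the polynomial realization of $\mathbf H_o$).
   Context: A plane forest is a finite sequence of plane trees (rooted trees in which the children of each vertex are linearly ordered). The noncommutative Connes–Kreimer algebra $\mathbf H_{NCK}$ has basis the plane forests, product = concatenation of sequences, and coproduct $\Delta(\overline{\mathcal F})=\sum_V\mathrm{Roo}_V\overline{\mathcal F}\otimes\mathrm{Lea}_V\overline{\mathcal F}$ over admissible cuts $V$ (sets of vertices no two of which are in ancestor/descendant relation), where $\mathrm{Lea}_V$ is the plane subforest formed by $V$ and its descendants and $\mathrm{Roo}_V$ the plane subforest formed by the remaining vertices, with inherited planar orders. An ordered forest on $n$ vertices is a rooted forest with vertex set $[n]$ (labels unrelated to the structure); $\mathbf H_o$ has basis the ordered forests, product $\mathcal F\mathcal G$ = disjoint union with labels of $\mathcal G$ shifted by the number of vertices of $\mathcal F$, and coproduct $\Delta(\mathcal F)=\sum_V\mathrm{Roo}_V\mathcal F\otimes\mathrm{Lea}_V\mathcal F$ over admissible cuts, where $\mathrm{Lea}_V\mathcal F$ (resp. $\mathrm{Roo}_V\mathcal F$) is the induced subforest on $V$ and its descendants (resp. on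 the complement), relabelled by the increasing bijection onto $[k]$. $S^{\mathcal F}$ denotes the polynomial realization of $\mathcal F$ (sum of $\mathcal F$-compatible words over $\{a_{ij}:0\le i<j\}$ with $a_{ij}\prec a_{kl}$ iff $j=k$, compatibility meaning $w_k\prec w_l$ whenever $k$ is the parent of $l$). *)

theory Defs
  imports Main "HOL-Library.Multiset"
begin

datatype ptree = PNode "ptree list"

type_synonym pforest = "ptree list"

text \<open>Vertices of a plane forest are addressed by paths: i # p is the vertex with
tree-path p in the i-th tree (0-based); in a tree, [] is the root and j # p is the
vertex with path p in the j-th subtree.\<close>

fun shiftp :: "nat list \<Rightarrow> nat list" where
  "shiftp [] = []"
| "shiftp (i # q) = Suc i # q"

fun verts_t :: "ptree \<Rightarrow> nat list set"
and verts_f :: "pforest \<Rightarrow> nat list set" where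
  "verts_t (PNode cs) = insert [] (verts_f cs)"
| "verts_f [] = {}"
| "verts_f (t # ts) = Cons 0 ` verts_t t \<union> shiftp ` verts_f ts"

text \<open>Sub-cut selectors: paths of V inside the first tree, and the remaining paths shifted.\<close>
definition first_part :: "nat list set \<Rightarrow> nat list set" where
  "first_part V = {p. 0 # p \<in> V}"
definition rest_part :: "nat list set \<Rightarrow> nat list set" where
  "rest_part V = {i # p | i p. Suc i # p \<in> V}"

text \<open>Lea_V: plane subforest formed by V and its descendants (inherited planar order).\<close>
fun lea_t :: "nat list set \<Rightarrow> ptree \<Rightarrow> pforest"
and lea_f :: "nat list set \<Rightarrow> pforest \<Rightarrow> pforest" where
  "lea_t V (PNode cs) = (if [] \<in> V then [PNode cs] else lea_f V cs)"
| "lea_f V [] = []"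
| "lea_f V (t # ts) = lea_t (first_part V) t @ lea_f (rest_part V) ts"

text \<open>Roo_V: plane subforest formed by the remaining vertices (inherited planar order).\<close>
fun roo_t :: "nat list set \<Rightarrow> ptree \<Rightarrow> pforest"
and roo_f :: "nat list set \<Rightarrow> pforest \<Rightarrow> pforest" where
  "roo_t V (PNode cs) = (if [] \<in> V then [] else [PNode (roo_f V cs)])"
| "roo_f V [] = []"
| "roo_f V (t # ts) = roo_t (first_part V) t @ roo_f (rest_part V) ts"

text \<open>Admissible cuts: sets of vertices no two of which are in ancestor/descendant
relation (ancestor = strict prefix of the path).\<close>
definition padm_cuts :: "pforest \<Rightarrow> nat list set set" where
  "padm_cuts F = {V. V \<subseteq> verts_f F \<and>
      (\<forall>u\<in>V. \<forall>v\<in>V. u \<noteq> v \<longrightarrow> \<not> (\<exists>w. v = u @ w))}"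

definition pcop :: "pforest \<Rightarrow> (pforest \<times> pforest) multiset" where
  "pcop F = image_mset (\<lambda>V. (roo_f V F, lea_f V F)) (mset_set (padm_cuts F))"

text \<open>An ordered forest on n vertices: vertex set {1..n}, parent function
(None = root).\<close>
type_synonym oforest = "nat \<times> (nat \<Rightarrow> nat option)"

definition parent_rel :: "(nat \<Rightarrow> nat option) \<Rightarrow> (nat \<times> nat) set" where
  "parent_rel par = {(j, i). par i = Some j}"

definition wf_oforest :: "oforest \<Rightarrow> bool" where
  "wf_oforest F = (case F of (n, par) \<Rightarrow>
      (\<forall>i. par i \<noteq> None \<longrightarrow> i \<in> {1..n} \<and> the (par i) \<in> {1..n})
      \<and> wf (parent_rel par))"

definition oprod :: "oforest \<Rightarrow> oforest \<Rightarrow> oforest" where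
  "oprod F G = (case F of (n, p) \<Rightarrow> case G of (m, q) \<Rightarrow>
     (n + m, \<lambda>i. if i \<le> n then p i else map_option (\<lambda>a. a + n) (q (i - n))))"

definition oempty :: oforest where
  "oempty = (0, \<lambda>_. None)"

text \<open>Induced subforest on W, relabelled by the increasing bijection W \<rightarrow> {1..card W}.\<close>
definition orestrict :: "nat set \<Rightarrow> oforest \<Rightarrow> oforest" where
  "orestrict W F = (case F of (n, p) \<Rightarrow>
     (let k = card W; s = sorted_list_of_set W;
          rank = (\<lambda>x. card {y\<in>W. y \<le> x}) in
      (k, \<lambda>j. if j \<in> {1..k} then
                (case p (s ! (j - 1)) of
                   None \<Rightarrow> None
                 | Some a \<Rightarrow> if a \<in> W then Some (rank a) else None)
              else None)))"

definition oadm_cuts :: "oforest \<Rightarrow> nat set set" where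
  "oadm_cuts F = (case F of (n, p) \<Rightarrow>
     {V. V \<subseteq> {1..n} \<and> (\<forall>u\<in>V. \<forall>v\<in>V. (u, v) \<notin> (parent_rel p)\<^sup>+)})"

definition olea_set :: "oforest \<Rightarrow> nat set \<Rightarrow> nat set" where
  "olea_set F V = (case F of (n, p) \<Rightarrow>
     {x\<in>{1..n}. \<exists>v\<in>V. (v, x) \<in> (parent_rel p)\<^sup>*})"

definition ocop :: "oforest \<Rightarrow> (oforest \<times> oforest) multiset" where
  "ocop F = image_mset
     (\<lambda>V. (orestrict ({1..fst F} - olea_set F V) F, orestrict (olea_set F V) F))
     (mset_set (oadm_cuts F))"

text \<open>List of parents (in preorder) of the vertices, numbered from off+1 on,
with par the label of the parent of the top-level roots.\<close>
fun pre_t :: "nat \<Rightarrow> nat option \<Rightarrow> ptree \<Rightarrow> nat option list"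
and pre_f :: "nat \<Rightarrow> nat option \<Rightarrow> pforest \<Rightarrow> nat option list" where
  "pre_t off par (PNode cs) = par # pre_f (Suc off) (Some (Suc off)) cs"
| "pre_f off par [] = []"
| "pre_f off par (t # ts) =
     pre_t off par t @ pre_f (off + length (pre_t off par t)) par ts"

definition iota :: "pforest \<Rightarrow> oforest" where
  "iota F = (let L = pre_f 0 None F in
     (length L, \<lambda>i. if 1 \<le> i \<and> i \<le> length L then L ! (i - 1) else None))"

text \<open>Elements of the free module over a basis 'b: finitely supported coefficient
functions. The tensor square of the free module on 'b is identified with the free
module on 'b \<times> 'b.\<close>
definition fsupp :: "('b \<Rightarrow> 'k::zero) \<Rightarrow> 'b set" where
  "fsupp x = {b. x b \<noteq> 0}"

definition free_mod :: "('b \<Rightarrow> 'k::zero) set" where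
  "free_mod = {x. finite (fsupp x)}"

definition lin_ext :: "('b \<Rightarrow> 'c) \<Rightarrow> ('b \<Rightarrow> 'k::comm_ring_1) \<Rightarrow> 'c \<Rightarrow> 'k" where
  "lin_ext g x = (\<lambda>c. \<Sum>b\<in>{b\<in>fsupp x. g b = c}. x b)"

definition bilin_ext :: "('b \<Rightarrow> 'b \<Rightarrow> 'b) \<Rightarrow> ('b \<Rightarrow> 'k::comm_ring_1) \<Rightarrow> ('b \<Rightarrow> 'k) \<Rightarrow> 'b \<Rightarrow> 'k" where
  "bilin_ext m x y = (\<lambda>c. \<Sum>(a, b)\<in>{(a, b). a \<in> fsupp x \<and> b \<in> fsupp y \<and> m a b = c}. x a * y b)"

text \<open>Linear extension of a coproduct given on basis elements by a multiset of
pairs of basis elements (all coefficients 1, with multiplicity).\<close>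
definition cop_ext :: "('b \<Rightarrow> ('b \<times> 'b) multiset) \<Rightarrow> ('b \<Rightarrow> 'k::comm_ring_1) \<Rightarrow> 'b \<times> 'b \<Rightarrow> 'k" where
  "cop_ext D x = (\<lambda>pq. \<Sum>b\<in>fsupp x. x b * of_nat (count (D b) pq))"

definition basis_vec :: "'b \<Rightarrow> 'b \<Rightarrow> 'k::comm_ring_1" where
  "basis_vec b = (\<lambda>c. if c = b then 1 else 0)"

definition H_NCK :: "(pforest \<Rightarrow> 'k::field) set" where
  "H_NCK = free_mod"
definition mult_NCK :: "(pforest \<Rightarrow> 'k::field) \<Rightarrow> (pforest \<Rightarrow> 'k) \<Rightarrow> pforest \<Rightarrow> 'k" where
  "mult_NCK = bilin_ext (@)"
definition unit_NCK :: "pforest \<Rightarrow> 'k::field" where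
  "unit_NCK = basis_vec []"
definition cop_NCK :: "(pforest \<Rightarrow> 'k::field) \<Rightarrow> pforest \<times> pforest \<Rightarrow> 'k" where
  "cop_NCK = cop_ext pcop"
definition counit_NCK :: "(pforest \<Rightarrow> 'k::field) \<Rightarrow> 'k" where
  "counit_NCK x = x []"

definition H_o :: "(oforest \<Rightarrow> 'k::field) set" where
  "H_o = {x\<in>free_mod. \<forall>F\<in>fsupp x. wf_oforest F}"
definition mult_o :: "(oforest \<Rightarrow> 'k::field) \<Rightarrow> (oforest \<Rightarrow> 'k) \<Rightarrow> oforest \<Rightarrow> 'k" where
  "mult_o = bilin_ext oprod"
definition unit_o :: "oforest \<Rightarrow> 'k::field" where
  "unit_o = basis_vec oempty"
definition cop_o :: "(oforest \<Rightarrow> 'k::field) \<Rightarrow> oforest \<times> oforest \<Rightarrow> 'k" where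
  "cop_o = cop_ext ocop"
definition counit_o :: "(oforest \<Rightarrow> 'k::field) \<Rightarrow> 'k" where
  "counit_o x = x oempty"

definition iota_lin :: "(pforest \<Rightarrow> 'k::field) \<Rightarrow> oforest \<Rightarrow> 'k" where
  "iota_lin = lin_ext iota"
definition iota_tensor :: "(pforest \<times> pforest \<Rightarrow> 'k::field) \<Rightarrow> oforest \<times> oforest \<Rightarrow> 'k" where
  "iota_tensor = lin_ext (map_prod iota iota)"

end

theory Submission
  imports Defs "HOL-Library.List_Lexorder"
begin

(*
  A vertex of a plane forest is addressed by its path (tree index followed by child indices).
  The left depth-first traversal visits the vertices in the lexicographic order of their paths,
  so iota F is the ordered forest obtained by numbering the path set of F increasingly, the
  parent of a path being the path without its last step (iota_eq_oforest_on).  Induced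
  subforests of such a numbered path set are numbered path sets again, and two path sets related
  by an order- and parent-preserving bijection carry the same ordered forest.  Such bijections
  are glued from a few elementary ones (prefixing, shifting tree indices, unions of consecutive
  blocks of trees, adding a root) and give the vertex sets of Roo_V F and Lea_V F
  (iso_paths_roo, iso_paths_lea).  As the ancestor relation of iota F is the prefix order of
  paths, admissible cuts of F and of iota F correspond, which yields the coproduct
  (ocop_iota).  Injectivity and multiplicativity are read off the parent lists pre_f
  (inj_iota, iota_append).  General facts on linear extensions of injective maps between bases
  then turn these statements about basis elements into the theorem.
*)

section \<open>Ranks in a finite linearly ordered set\<close>

text \<open>Numbering the vertices of a finite ordered vertex set by
  their ranks is how all ordered forests below are produced.\<close>
definition rank_in :: "'a::linorder set \<Rightarrow> 'a \<Rightarrow> nat" where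
  "rank_in S x = card {y\<in>S. y \<le> x}"

lemma card_le_nth_sorted:
  fixes xs :: "'a::linorder list"
  assumes sorted: "sorted_wrt (<) xs" and i: "i < length xs"
  shows "card {y \<in> set xs. y \<le> xs ! i} = Suc i"
proof -
  have "{y \<in> set xs. y \<le> xs ! i} = (!) xs ` {..i}"
  proof (intro set_eqI iffI)
    fix y assume "y \<in> {y \<in> set xs. y \<le> xs ! i}"
    then obtain j where j: "j < length xs" "y = xs ! j" "xs ! j \<le> xs ! i"
      by (auto simp: in_set_conv_nth)
    then have "j \<le> i" using sorted i by (metis leD not_le_imp_less sorted_wrt_nth_less)
    then show "y \<in> (!) xs ` {..i}" using j by auto
  next
    fix y assume "y \<in> (!) xs ` {..i}"
    then show "y \<in> {y \<in> set xs. y \<le> xs ! i}"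
      using sorted i by (auto simp: strict_sorted_iff sorted_nth_mono)
  qed
  moreover have "inj_on ((!) xs) {..i}"
    using sorted i by (intro inj_on_nth) (auto simp: strict_sorted_iff)
  ultimately show ?thesis by (simp add: card_image)
qed

lemma rank_in_nth:
  fixes S :: "'a::linorder set"
  assumes "finite S" "x \<in> S"
  shows "sorted_list_of_set S ! (rank_in S x - 1) = x" and "1 \<le> rank_in S x" "rank_in S x \<le> card S"
proof -
  let ?xs = "sorted_list_of_set S"
  obtain i where i: "i < length ?xs" "?xs ! i = x"
    using assms by (metis in_set_conv_nth set_sorted_list_of_set)
  have "rank_in S x = Suc i"
    using card_le_nth_sorted[of ?xs i] i assms by (simp add: rank_in_def)
  then show "?xs ! (rank_in S x - 1) = x" "1 \<le> rank_in S x" "rank_in S x \<le> card S"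
    using i by auto
qed

lemma rank_in_less:
  fixes S :: "'a::linorder set"
  assumes "finite S" "y \<in> S" "x < y"
  shows "rank_in S x < rank_in S y"
  unfolding rank_in_def
proof (rule psubset_card_mono)
  have "y \<in> {z \<in> S. z \<le> y}" "y \<notin> {z \<in> S. z \<le> x}" using assms by auto
  then show "{z \<in> S. z \<le> x} \<subset> {z \<in> S. z \<le> y}" using assms by auto
qed (use assms in simp)

lemma rank_in_less_iff:
  fixes S :: "'a::linorder set"
  shows "finite S \<Longrightarrow> x \<in> S \<Longrightarrow> y \<in> S \<Longrightarrow> rank_in S x < rank_in S y \<longleftrightarrow> x < y"
  using rank_in_less[of S y x] rank_in_less[of S x y] by (cases x y rule: linorder_cases) auto

lemma rank_in_inj: "finite S \<Longrightarrow> inj_on (rank_in S) (S::'a::linorder set)"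
  by (metis inj_onI less_irrefl linorder_neqE rank_in_less_iff)

lemma rank_in_image:
  assumes "finite (S::'a::linorder set)"
  shows "rank_in S ` S = {1..card S}"
proof -
  have "rank_in S ` S \<subseteq> {1..card S}" using rank_in_nth[OF assms] by auto
  moreover have "card (rank_in S ` S) = card S" using rank_in_inj[OF assms] by (simp add: card_image)
  ultimately show ?thesis by (intro card_subset_eq) auto
qed

lemma rank_in_image_mono:
  fixes f :: "'a::linorder \<Rightarrow> 'b::linorder"
  assumes "finite A" "strict_mono_on A f" "x \<in> A"
  shows "rank_in (f ` A) (f x) = rank_in A x"
proof -
  have "{y \<in> f ` A. y \<le> f x} = f ` {y\<in>A. y \<le> x}"
    using assms by (auto simp: strict_mono_on_leD strict_mono_on_less_eq)
  then show ?thesis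
    using strict_mono_on_imp_inj_on[OF assms(2)] by (simp add: rank_in_def card_image inj_on_subset)
qed

lemma rank_in_union:
  fixes A :: "'a::linorder set"
  assumes fin: "finite A" "finite B" and below: "\<And>a b. a \<in> A \<Longrightarrow> b \<in> B \<Longrightarrow> a < b"
  shows "x \<in> A \<Longrightarrow> rank_in (A \<union> B) x = rank_in A x"
    and "x \<in> B \<Longrightarrow> rank_in (A \<union> B) x = card A + rank_in B x"
proof -
  show "x \<in> A \<Longrightarrow> rank_in (A \<union> B) x = rank_in A x"
    using below unfolding rank_in_def by (metis (lifting) Un_iff leD)
  assume x: "x \<in> B"
  have "{y \<in> A \<union> B. y \<le> x} = A \<union> {y \<in> B. y \<le> x}" "A \<inter> {y \<in> B. y \<le> x} = {}"
    using below x by force+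
  then show "rank_in (A \<union> B) x = card A + rank_in B x"
    using fin by (simp add: rank_in_def card_Un_disjoint)
qed

section \<open>The ordered forest carried by a finite ordered vertex set\<close>

definition oforest_on :: "'a::linorder set \<Rightarrow> ('a \<Rightarrow> 'a option) \<Rightarrow> oforest" where
  "oforest_on S p = (card S, \<lambda>i. if i \<in> {1..card S}
      then map_option (rank_in S) (p (sorted_list_of_set S ! (i - 1))) else None)"

lemma fst_oforest_on [simp]: "fst (oforest_on S p) = card S"
  by (simp add: oforest_on_def)

lemma oforest_on_at:
  fixes S :: "'a::linorder set"
  assumes "finite S" "x \<in> S"
  shows "snd (oforest_on S p) (rank_in S x) = map_option (rank_in S) (p x)"
  using rank_in_nth[OF assms] by (simp add: oforest_on_def)

lemma oforest_on_out: "i \<notin> {1..card S} \<Longrightarrow> snd (oforest_on S p) i = None"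
  unfolding oforest_on_def by auto

lemma oforest_on_eqI:
  fixes S :: "'a::linorder set"
  assumes fin: "finite S" and n: "n = card S"
    and at: "\<And>x. x \<in> S \<Longrightarrow> f (rank_in S x) = map_option (rank_in S) (p x)"
    and out: "\<And>i. i \<notin> {1..n} \<Longrightarrow> f i = None"
  shows "(n, f) = oforest_on S p"
proof -
  have "f i = snd (oforest_on S p) i" for i
  proof (cases "i \<in> {1..card S}")
    case True
    then obtain x where "x \<in> S" "i = rank_in S x" using rank_in_image[OF fin] by blast
    then show ?thesis using at oforest_on_at[OF fin] by simp
  next
    case False
    then show ?thesis using n out oforest_on_out by metis
  qed
  then show ?thesis using n by (metis fst_oforest_on prod.collapse ext)
qed

lemma oforest_on_iso:
  fixes A :: "'a::linorder set" and e :: "'a \<Rightarrow> 'b::linorder"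
  assumes fin: "finite A" and mono: "strict_mono_on A e" and img: "e ` A = B"
    and closed: "\<And>x a. x \<in> A \<Longrightarrow> p x = Some a \<Longrightarrow> a \<in> A"
    and par: "\<And>x. x \<in> A \<Longrightarrow> p' (e x) = map_option e (p x)"
  shows "oforest_on B p' = oforest_on A p"
proof -
  have rank_e: "rank_in B (e x) = rank_in A x" if "x \<in> A" for x
    using rank_in_image_mono[OF fin mono that] img by simp
  have "(fst (oforest_on B p'), snd (oforest_on B p')) = oforest_on A p"
  proof (rule oforest_on_eqI[OF fin])
    show "fst (oforest_on B p') = card A"
      using img card_image[OF strict_mono_on_imp_inj_on[OF mono]] by simp
  next
    fix x assume x: "x \<in> A"
    have "snd (oforest_on B p') (rank_in A x) = map_option (rank_in B) (p' (e x))"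
      using oforest_on_at[of B "e x" p'] fin img x rank_e by auto
    also have "\<dots> = map_option (rank_in A) (p x)"
      using par[OF x] closed[OF x] rank_e by (cases "p x") auto
    finally show "snd (oforest_on B p') (rank_in A x) = map_option (rank_in A) (p x)" .
  qed (simp add: oforest_on_out)
  then show ?thesis by (metis prod.collapse)
qed

definition restrict_parent :: "'a set \<Rightarrow> ('a \<Rightarrow> 'a option) \<Rightarrow> 'a \<Rightarrow> 'a option" where
  "restrict_parent T p x = (case p x of None \<Rightarrow> None | Some a \<Rightarrow> if a \<in> T then Some a else None)"

lemma orestrict_oforest_on:
  fixes S :: "'a::linorder set"
  assumes fin: "finite S" and sub: "T \<subseteq> S" and closed: "\<And>x a. x \<in> S \<Longrightarrow> p x = Some a \<Longrightarrow> a \<in> S"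
  shows "orestrict (rank_in S ` T) (oforest_on S p) = oforest_on T (restrict_parent T p)"
proof -
  let ?W = "rank_in S ` T"
  have finT: "finite T" using fin sub finite_subset by blast
  have injS: "inj_on (rank_in S) S" using rank_in_inj[OF fin] .
  have mono: "strict_mono_on T (rank_in S)"
    using sub rank_in_less[OF fin] by (auto intro: strict_mono_onI)
  have rank_W: "rank_in ?W (rank_in S x) = rank_in T x" if "x \<in> T" for x
    by (rule rank_in_image_mono[OF finT mono that])
  have card_W: "card ?W = card T" using inj_on_subset[OF injS sub] by (simp add: card_image)
  obtain n f where nf: "oforest_on S p = (n, f)" by (cases "oforest_on S p")
  have f_at: "f (rank_in S x) = map_option (rank_in S) (p x)" if "x \<in> S" for x
    using oforest_on_at[OF fin that, of p] nf by simp
  define g where "g = (\<lambda>j. if j \<in> {1..card ?W} then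
      (case f (sorted_list_of_set ?W ! (j - 1)) of
         None \<Rightarrow> None
       | Some a \<Rightarrow> if a \<in> ?W then Some (rank_in ?W a) else None)
    else None)"
  have "orestrict ?W (oforest_on S p) = (card ?W, g)"
    unfolding orestrict_def nf g_def Let_def rank_in_def by simp
  also have "(card ?W, g) = oforest_on T (restrict_parent T p)"
  proof (rule oforest_on_eqI[OF finT card_W])
    fix x assume x: "x \<in> T"
    then have xS: "x \<in> S" using sub by blast
    have "sorted_list_of_set ?W ! (rank_in T x - 1) = rank_in S x"
      using rank_in_nth(1)[of ?W "rank_in S x"] rank_W[OF x] x finT by simp
    then have "g (rank_in T x) = (case p x of None \<Rightarrow> None
        | Some a \<Rightarrow> if rank_in S a \<in> ?W then Some (rank_in ?W (rank_in S a)) else None)"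
      unfolding g_def using rank_in_nth(2,3)[OF finT x] card_W f_at[OF xS] by (cases "p x") auto
    also have "\<dots> = map_option (rank_in T) (restrict_parent T p x)"
    proof (cases "p x")
      case (Some a)
      then have "a \<in> S" using closed xS by blast
      then have "rank_in S a \<in> ?W \<longleftrightarrow> a \<in> T" using injS sub by (auto dest: inj_onD)
      then show ?thesis using Some rank_W by (simp add: restrict_parent_def)
    qed (simp add: restrict_parent_def)
    finally show "g (rank_in T x) = map_option (rank_in T) (restrict_parent T p x)" .
  qed (auto simp: g_def)
  finally show ?thesis .
qed

definition parent_pairs :: "'a set \<Rightarrow> ('a \<Rightarrow> 'a option) \<Rightarrow> ('a \<times> 'a) set" where
  "parent_pairs S p = {(a, x). x \<in> S \<and> p x = Some a}"

lemma parent_rel_oforest_on: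
  fixes S :: "'a::linorder set"
  assumes fin: "finite S" and closed: "\<And>x a. x \<in> S \<Longrightarrow> p x = Some a \<Longrightarrow> a \<in> S"
  shows "parent_rel (snd (oforest_on S p)) = map_prod (rank_in S) (rank_in S) ` parent_pairs S p"
proof (intro set_eqI iffI)
  fix q assume "q \<in> parent_rel (snd (oforest_on S p))"
  then obtain j i where q: "q = (j, i)" and ji: "snd (oforest_on S p) i = Some j"
    by (auto simp: parent_rel_def)
  then have "i \<in> {1..card S}" using oforest_on_out by fastforce
  then obtain x where x: "x \<in> S" "i = rank_in S x" using rank_in_image[OF fin] by blast
  then obtain a where "p x = Some a" "j = rank_in S a" using ji oforest_on_at[OF fin x(1)] by auto
  then show "q \<in> map_prod (rank_in S) (rank_in S) ` parent_pairs S p"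
    using q x by (force simp: parent_pairs_def)
next
  fix q assume "q \<in> map_prod (rank_in S) (rank_in S) ` parent_pairs S p"
  then obtain a x where "q = (rank_in S a, rank_in S x)" "x \<in> S" "p x = Some a"
    by (auto simp: parent_pairs_def)
  then show "q \<in> parent_rel (snd (oforest_on S p))"
    using oforest_on_at[OF fin] by (simp add: parent_rel_def)
qed

lemma wf_oforest_on:
  fixes S :: "'a::linorder set"
  assumes fin: "finite S" and below: "\<And>x a. x \<in> S \<Longrightarrow> p x = Some a \<Longrightarrow> a \<in> S \<and> a < x"
  shows "wf_oforest (oforest_on S p)"
proof -
  let ?r = "rank_in S"
  have rel: "parent_rel (snd (oforest_on S p)) = map_prod ?r ?r ` parent_pairs S p"
    using parent_rel_oforest_on[OF fin] below by blast
  have range: "i \<in> {1..card S} \<and> the (snd (oforest_on S p) i) \<in> {1..card S}"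
    if has_parent: "snd (oforest_on S p) i \<noteq> None" for i
  proof -
    obtain j where "snd (oforest_on S p) i = Some j" using has_parent by blast
    then have "(j, i) \<in> parent_rel (snd (oforest_on S p))" by (simp add: parent_rel_def)
    then have "(j, i) \<in> map_prod ?r ?r ` parent_pairs S p" using rel by simp
    then have "i \<in> ?r ` S" "j \<in> ?r ` S" using below by (auto simp: parent_pairs_def)
    then show ?thesis using rank_in_image[OF fin] \<open>snd (oforest_on S p) i = Some j\<close> by auto
  qed
  have "parent_rel (snd (oforest_on S p)) \<subseteq> less_than"
    using below rank_in_less[OF fin] by (auto simp: rel parent_pairs_def)
  then have "wf (parent_rel (snd (oforest_on S p)))" by (rule wf_subset[OF wf_less_than])
  moreover obtain n q where nq: "oforest_on S p = (n, q)" by fastforce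
  moreover have "n = card S" using nq fst_oforest_on by (metis fst_conv)
  ultimately show ?thesis using range by (simp add: wf_oforest_def)
qed

lemma trancl_map_prod_inj:
  assumes inj: "inj_on f S" and sub: "R \<subseteq> S \<times> S"
  shows "(map_prod f f ` R)\<^sup>+ = map_prod f f ` R\<^sup>+"
proof
  show "map_prod f f ` R\<^sup>+ \<subseteq> (map_prod f f ` R)\<^sup>+"
  proof (rule subrelI)
    fix x y assume "(x, y) \<in> map_prod f f ` R\<^sup>+"
    then obtain a b where ab: "(a, b) \<in> R\<^sup>+" "x = f a" "y = f b" by auto
    from ab(1) have "(f a, f b) \<in> (map_prod f f ` R)\<^sup>+"
      by (induction rule: trancl_induct) (force intro: trancl_into_trancl)+
    then show "(x, y) \<in> (map_prod f f ` R)\<^sup>+" using ab by simp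
  qed
next
  have RS: "R\<^sup>+ \<subseteq> S \<times> S" using sub trancl_subset_Sigma by blast
  show "(map_prod f f ` R)\<^sup>+ \<subseteq> map_prod f f ` R\<^sup>+"
  proof (rule subrelI)
    fix x y assume "(x, y) \<in> (map_prod f f ` R)\<^sup>+"
    then have "\<exists>a b. (a, b) \<in> R\<^sup>+ \<and> x = f a \<and> y = f b"
    proof (induction rule: trancl_induct)
      case (step y z)
      then obtain a b c d where ab: "(a, b) \<in> R\<^sup>+" "x = f a" "y = f b"
        and cd: "(c, d) \<in> R" "y = f c" "z = f d" by blast
      then have "b = c" using inj RS sub by (auto dest: inj_onD)
      then show ?case using ab cd by (blast intro: trancl_into_trancl)
    qed blast
    then show "(x, y) \<in> map_prod f f ` R\<^sup>+" by force
  qed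
qed

section \<open>Linear extensions of injective maps between bases\<close>

lemma lin_ext_at:
  assumes "inj g"
  shows "lin_ext g x (g d) = x d"
proof -
  have "{b \<in> fsupp x. g b = g d} = (if x d \<noteq> 0 then {d} else {})"
    using assms by (auto simp: fsupp_def dest: injD)
  then show ?thesis by (simp add: lin_ext_def)
qed

lemma lin_ext_out:
  assumes "c \<notin> range g"
  shows "lin_ext g x c = 0"
proof -
  have empty: "{b \<in> fsupp x. g b = c} = {}" using assms by auto
  show ?thesis unfolding lin_ext_def empty by simp
qed

lemma fsupp_lin_ext:
  assumes "inj g"
  shows "fsupp (lin_ext g x) = g ` fsupp x"
proof (intro set_eqI iffI)
  fix c assume c: "c \<in> fsupp (lin_ext g x)"
  have "c \<in> range g"
  proof (rule ccontr)
    assume "c \<notin> range g"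
    then have "lin_ext g x c = 0" by (rule lin_ext_out)
    then show False using c by (simp add: fsupp_def)
  qed
  then obtain d where "c = g d" by blast
  then show "c \<in> g ` fsupp x" using c by (simp add: fsupp_def lin_ext_at[OF assms])
next
  fix c assume "c \<in> g ` fsupp x"
  then obtain d where "c = g d" "x d \<noteq> 0" by (auto simp: fsupp_def)
  then show "c \<in> fsupp (lin_ext g x)" by (simp add: fsupp_def lin_ext_at[OF assms])
qed

lemma lin_ext_free_mod: "inj g \<Longrightarrow> x \<in> free_mod \<Longrightarrow> lin_ext g x \<in> free_mod"
  by (simp add: free_mod_def fsupp_lin_ext)

lemma inj_lin_ext:
  assumes "inj g"
  shows "inj (lin_ext g)"
proof (rule injI)
  fix x y assume "lin_ext g x = lin_ext g y"
  then have "x d = y d" for d using lin_ext_at[OF assms] by metis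
  then show "x = y" by (rule ext)
qed

lemma lin_ext_basis_vec:
  assumes "inj g"
  shows "lin_ext g (basis_vec b) = basis_vec (g b)"
proof
  fix c
  show "lin_ext g (basis_vec b) c = basis_vec (g b) c"
  proof (cases "c \<in> range g")
    case True
    then show ?thesis using assms by (auto simp: lin_ext_at basis_vec_def dest: injD)
  next
    case False
    then show ?thesis by (auto simp: lin_ext_out basis_vec_def)
  qed
qed

lemma lin_ext_bilin_ext:
  fixes x y :: "'b \<Rightarrow> 'k::comm_ring_1"
  assumes inj: "inj g" and hom: "\<And>a b. g (m a b) = m' (g a) (g b)"
  shows "lin_ext g (bilin_ext m x y) = bilin_ext m' (lin_ext g x) (lin_ext g y)"
proof
  fix c
  let ?Q = "{(a, b). a \<in> fsupp x \<and> b \<in> fsupp y \<and> g (m a b) = c}"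
  have inj2: "inj_on (map_prod g g) ?Q" using map_prod_inj_on[OF inj inj] by (rule inj_on_subset) simp
  have "{(a, b). a \<in> fsupp (lin_ext g x) \<and> b \<in> fsupp (lin_ext g y) \<and> m' a b = c}
      = map_prod g g ` ?Q"
  proof (intro set_eqI iffI)
    fix ab assume "ab \<in> {(a, b). a \<in> fsupp (lin_ext g x) \<and> b \<in> fsupp (lin_ext g y) \<and> m' a b = c}"
    then obtain a' b' where ab': "ab = (a', b')" "a' \<in> g ` fsupp x" "b' \<in> g ` fsupp y" "m' a' b' = c"
      unfolding fsupp_lin_ext[OF inj] by (cases ab) simp
    then obtain a b where ab: "ab = (g a, g b)" "a \<in> fsupp x" "b \<in> fsupp y" "m' (g a) (g b) = c"
      by blast
    then have "(a, b) \<in> ?Q" by (simp add: hom)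
    then show "ab \<in> map_prod g g ` ?Q" by (rule rev_image_eqI) (simp add: ab(1))
  next
    fix ab assume "ab \<in> map_prod g g ` ?Q"
    then obtain a b where "(a, b) \<in> ?Q" "ab = (g a, g b)" by auto
    then show "ab \<in> {(a, b). a \<in> fsupp (lin_ext g x) \<and> b \<in> fsupp (lin_ext g y) \<and> m' a b = c}"
      unfolding fsupp_lin_ext[OF inj] by (simp add: hom[symmetric])
  qed
  note image = this
  have rhs: "bilin_ext m' (lin_ext g x) (lin_ext g y) c = (\<Sum>(a, b)\<in>?Q. x a * y b)"
    unfolding bilin_ext_def image sum.reindex[OF inj2]
    by (rule sum.cong) (auto simp: lin_ext_at[OF inj])
  show "lin_ext g (bilin_ext m x y) c = bilin_ext m' (lin_ext g x) (lin_ext g y) c"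
  proof (cases "c \<in> range g")
    case True
    then obtain d where d: "c = g d" by blast
    then have Q: "?Q = {(a, b). a \<in> fsupp x \<and> b \<in> fsupp y \<and> m a b = d}"
      using inj by (auto dest: injD)
    have "lin_ext g (bilin_ext m x y) c = bilin_ext m x y d" unfolding d by (rule lin_ext_at[OF inj])
    also have "\<dots> = (\<Sum>(a, b)\<in>?Q. x a * y b)" unfolding bilin_ext_def Q ..
    also have "\<dots> = bilin_ext m' (lin_ext g x) (lin_ext g y) c" by (rule rhs[symmetric])
    finally show ?thesis .
  next
    case False
    then have Q: "?Q = {}" by auto
    show ?thesis using rhs unfolding Q by (simp add: lin_ext_out[OF False])
  qed
qed

lemma count_image_mset_inj:
  assumes "inj f"
  shows "count (image_mset f M) (f a) = count M a"
proof -
  have "f -` {f a} \<inter> set_mset M = {a} \<inter> set_mset M" using assms by (auto dest: injD)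
  then show ?thesis by (cases "a \<in># M") (auto simp: count_image_mset not_in_iff)
qed

lemma lin_ext_cop_ext:
  fixes x :: "'b \<Rightarrow> 'k::comm_ring_1"
  assumes inj: "inj g" and hom: "\<And>b. D' (g b) = image_mset (map_prod g g) (D b)"
  shows "cop_ext D' (lin_ext g x) = lin_ext (map_prod g g) (cop_ext D x)"
proof
  fix pq
  have inj2: "inj (map_prod g g)" using map_prod_inj_on[OF inj inj] by simp
  have "cop_ext D' (lin_ext g x) pq
      = (\<Sum>b\<in>fsupp x. x b * of_nat (count (image_mset (map_prod g g) (D b)) pq))"
    unfolding cop_ext_def fsupp_lin_ext[OF inj] sum.reindex[OF inj_on_subset[OF inj subset_UNIV]]
    by (simp add: lin_ext_at[OF inj] hom)
  also have "\<dots> = lin_ext (map_prod g g) (cop_ext D x) pq"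
  proof (cases "pq \<in> range (map_prod g g)")
    case True
    then obtain ab where ab: "pq = map_prod g g ab" by (rule rangeE)
    have "count (image_mset (map_prod g g) M) pq = count M ab" for M
      unfolding ab by (rule count_image_mset_inj[OF inj2])
    then show ?thesis unfolding ab lin_ext_at[OF inj2] by (simp add: cop_ext_def)
  next
    case False
    then have "count (image_mset (map_prod g g) M) pq = 0" for M by (auto simp: count_eq_zero_iff)
    then show ?thesis by (simp add: lin_ext_out[OF False])
  qed
  finally show "cop_ext D' (lin_ext g x) pq = lin_ext (map_prod g g) (cop_ext D x) pq" .
qed

section \<open>Vertex paths of plane forests\<close>

lemma pforest_induct [case_names Nil Cons]:
  assumes "P []" and "\<And>cs ts. P cs \<Longrightarrow> P ts \<Longrightarrow> P (PNode cs # ts)"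
  shows "P F"
proof -
  have "\<forall>ts. P ts \<longrightarrow> P (t # ts)" and "P F" for t
    by (induction t and F rule: verts_t_verts_f.induct) (use assms in blast)+
  then show ?thesis by blast
qed

lemma verts_f_PNode_Cons:
  "verts_f (PNode cs # ts) = Cons 0 ` insert [] (verts_f cs) \<union> shiftp ` verts_f ts"
  by simp

lemma verts_finite: "finite (verts_t t)" "finite (verts_f F)"
  by (induction t and F rule: verts_t_verts_f.induct) auto

lemma shiftp_eq_Nil_iff [simp]: "shiftp x = [] \<longleftrightarrow> x = []" "[] = shiftp x \<longleftrightarrow> x = []"
  by (cases x; auto)+

lemma inj_shiftp: "inj shiftp"
proof (rule injI)
  show "shiftp x = shiftp y \<Longrightarrow> x = y" for x y by (cases x; cases y) auto
qed

lemma butlast_shiftp: "butlast (shiftp x) = shiftp (butlast x)"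
  by (cases x) auto

lemma length_shiftp [simp]: "length (shiftp x) = length x"
  by (cases x) auto

lemma shiftp_neq_Cons0 [simp]: "shiftp x \<noteq> 0 # z" "0 # z \<noteq> shiftp x"
  by (cases x; simp)+

lemma shiftp_eq_Suc_Cons_iff [simp]: "shiftp x = Suc j # q \<longleftrightarrow> x = j # q" "Suc j # q = shiftp x \<longleftrightarrow> x = j # q"
  by (cases x; auto)+

lemma Nil_notin_verts_f: "[] \<notin> verts_f F"
  by (induction F) auto

lemma Cons0_less_shiftp: "w \<noteq> [] \<Longrightarrow> 0 # x < shiftp w"
  by (cases w) auto

lemma shiftp_less_shiftp: "z \<noteq> [] \<Longrightarrow> w \<noteq> [] \<Longrightarrow> shiftp z < shiftp w \<longleftrightarrow> z < w"
  by (cases z; cases w) auto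

lemma Nil_less_iff: "[] < (xs::'a::linorder list) \<longleftrightarrow> xs \<noteq> []"
  by (cases xs) auto

lemma two_le_length_iff: "2 \<le> length x \<longleftrightarrow> x \<noteq> [] \<and> length x \<noteq> 1"
  by (cases x) (auto simp: Suc_le_eq)

definition parent_closed :: "nat list set \<Rightarrow> bool" where
  "parent_closed A \<longleftrightarrow> (\<forall>x\<in>A. 2 \<le> length x \<longrightarrow> butlast x \<in> A)"

lemma parent_closed_verts_f: "parent_closed (verts_f F)"
  unfolding parent_closed_def
proof (induction F rule: pforest_induct)
  case (Cons cs ts)
  show ?case
  proof (intro ballI impI)
    fix x assume x: "x \<in> verts_f (PNode cs # ts)" and len: "2 \<le> length x"
    then consider y where "y \<in> insert [] (verts_f cs)" "x = 0 # y"
      | w where "w \<in> verts_f ts" "x = shiftp w"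
      by auto
    then show "butlast x \<in> verts_f (PNode cs # ts)"
    proof cases
      case 1
      then have "length y = 1 \<or> 2 \<le> length y" using len by auto
      then show ?thesis using 1 Cons.IH(1) by (auto simp: length_Suc_conv)
    next
      case 2
      then show ?thesis using Cons.IH(2) len by (auto simp: butlast_shiftp)
    qed
  qed
qed simp

lemma rank_in_verts_Cons:
  fixes cs ts defines "S \<equiv> verts_f (PNode cs # ts)"
  shows "rank_in S [0] = 1"
    and "y \<in> verts_f cs \<Longrightarrow> rank_in S (0 # y) = Suc (rank_in (verts_f cs) y)"
    and "w \<in> verts_f ts \<Longrightarrow> rank_in S (shiftp w) = Suc (card (verts_f cs)) + rank_in (verts_f ts) w"
    and "card S = Suc (card (verts_f cs)) + card (verts_f ts)"
proof -
  let ?C = "verts_f cs" and ?T = "verts_f ts"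
  have fin: "finite ?C" "finite ?T" by (simp_all add: verts_finite)
  have ne: "x \<noteq> []" if "x \<in> ?C \<or> x \<in> ?T" for x using that Nil_notin_verts_f by blast
  have S: "S = Cons 0 ` ({[]} \<union> ?C) \<union> shiftp ` ?T" by (simp add: S_def)
  have below: "a < b" if "a \<in> Cons 0 ` ({[]} \<union> ?C)" "b \<in> shiftp ` ?T" for a b
    using that ne by (auto intro: Cons0_less_shiftp)
  have root_below: "a < b" if "a \<in> {[]}" "b \<in> ?C" for a b
    using that ne by (auto simp: Nil_less_iff)
  have mono_Cons: "strict_mono_on ({[]} \<union> ?C) (Cons 0)" by (auto intro: strict_mono_onI)
  have mono_shiftp: "strict_mono_on ?T shiftp"
    using ne by (auto intro: strict_mono_onI simp: shiftp_less_shiftp)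
  have card_first: "card (Cons 0 ` ({[]} \<union> ?C)) = Suc (card ?C)"
    using fin ne by (auto simp: card_image card_insert_if)
  have rank_first: "rank_in S (0 # y) = rank_in ({[]} \<union> ?C) y" if "y \<in> {[]} \<union> ?C" for y
  proof -
    have "rank_in S (0 # y) = rank_in (Cons 0 ` ({[]} \<union> ?C)) (0 # y)"
      unfolding S by (rule rank_in_union(1)) (use below fin that in auto)
    also have "\<dots> = rank_in ({[]} \<union> ?C) y"
      by (rule rank_in_image_mono[OF _ mono_Cons that]) (use fin in simp)
    finally show ?thesis .
  qed
  have rank_root: "rank_in ({[]} \<union> ?C) y = (if y = [] then 1 else Suc (rank_in ?C y))"
    if "y \<in> {[]} \<union> ?C" for y
    using rank_in_union[of "{[]}" ?C y] fin(1) root_below that by (auto simp: rank_in_def)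
  show "rank_in S [0] = 1" "y \<in> ?C \<Longrightarrow> rank_in S (0 # y) = Suc (rank_in ?C y)"
    using rank_first rank_root ne by auto
  show "w \<in> ?T \<Longrightarrow> rank_in S (shiftp w) = Suc (card ?C) + rank_in ?T w"
    using rank_in_union(2)[of "Cons 0 ` ({[]} \<union> ?C)" "shiftp ` ?T" "shiftp w"] below fin
      rank_in_image_mono[OF fin(2) mono_shiftp] card_first by (simp add: S)
  show "card S = Suc (card ?C) + card ?T"
  proof -
    have "Cons 0 ` ({[]} \<union> ?C) \<inter> shiftp ` ?T = {}" using below by (meson disjoint_iff less_irrefl)
    then have "card S = card (Cons 0 ` ({[]} \<union> ?C)) + card (shiftp ` ?T)"
      unfolding S using fin by (intro card_Un_disjoint) auto
    then show ?thesis using card_first card_image[OF inj_on_subset[OF inj_shiftp]] by simp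
  qed
qed

lemma prefix_less: "w \<noteq> [] \<Longrightarrow> (u::nat list) < u @ w"
  by (induction u) (auto simp: Nil_less_iff)

section \<open>The preorder numbering is the lexicographic numbering of paths\<close>

lemma length_pre_f: "length (pre_f off par F) = card (verts_f F)"
proof (induction F arbitrary: off par rule: pforest_induct)
  case (Cons cs ts)
  then show ?case using rank_in_verts_Cons(4)[of cs ts] by simp
qed simp

lemma nth_pre_f_PNode_Cons:
  fixes cs ts defines "S \<equiv> verts_f (PNode cs # ts)"
  shows "pre_f off par (PNode cs # ts) ! (rank_in S [0] - 1) = par"
    and "y \<in> verts_f cs \<Longrightarrow> pre_f off par (PNode cs # ts) ! (rank_in S (0 # y) - 1)
           = pre_f (Suc off) (Some (Suc off)) cs ! (rank_in (verts_f cs) y - 1)"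
    and "w \<in> verts_f ts \<Longrightarrow> pre_f off par (PNode cs # ts) ! (rank_in S (shiftp w) - 1)
           = pre_f (off + Suc (card (verts_f cs))) par ts ! (rank_in (verts_f ts) w - 1)"
proof -
  let ?X = "pre_f (Suc off) (Some (Suc off)) cs"
  have unfold: "pre_f off par (PNode cs # ts) = par # ?X @ pre_f (off + Suc (card (verts_f cs))) par ts"
    by (simp add: length_pre_f)
  show "pre_f off par (PNode cs # ts) ! (rank_in S [0] - 1) = par"
    using rank_in_verts_Cons(1)[of cs ts] by (simp add: S_def)
  show "pre_f off par (PNode cs # ts) ! (rank_in S (0 # y) - 1) = ?X ! (rank_in (verts_f cs) y - 1)"
    if "y \<in> verts_f cs"
    using rank_in_verts_Cons(2)[where cs=cs and ts=ts, OF that] rank_in_nth(2,3)[OF verts_finite(2) that]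
    by (auto simp: S_def unfold nth_append length_pre_f)
  show "pre_f off par (PNode cs # ts) ! (rank_in S (shiftp w) - 1)
      = pre_f (off + Suc (card (verts_f cs))) par ts ! (rank_in (verts_f ts) w - 1)"
    if "w \<in> verts_f ts"
    using rank_in_verts_Cons(3)[where cs=cs and ts=ts, OF that] rank_in_nth(2)[OF verts_finite(2) that]
    by (auto simp: S_def unfold nth_append length_pre_f)
qed

text \<open>The left depth-first traversal visits the vertices of a plane forest in the lexicographic
  order of their paths: the entry of pre_f off par F belonging to the vertex x (at position
  rank(x) - 1) is par for a top-level root, and otherwise off plus the rank of the parent path.\<close>
lemma pre_f_parents:
  "x \<in> verts_f F \<Longrightarrow> pre_f off par F ! (rank_in (verts_f F) x - 1) =
      (if length x = 1 then par else Some (off + rank_in (verts_f F) (butlast x)))"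
proof (induction F arbitrary: x off par rule: pforest_induct)
  case (Cons cs ts)
  let ?S = "verts_f (PNode cs # ts)" and ?C = "verts_f cs" and ?T = "verts_f ts"
  from Cons.prems consider "x = [0]" | y where "y \<in> ?C" "x = 0 # y"
    | w where "w \<in> ?T" "x = shiftp w"
    by auto
  then show ?case
  proof cases
    case 1
    then show ?thesis using nth_pre_f_PNode_Cons(1) by simp
  next
    case (2 y)
    have "pre_f off par (PNode cs # ts) ! (rank_in ?S x - 1)
        = (if length y = 1 then Some (Suc off) else Some (Suc off + rank_in ?C (butlast y)))"
      using 2 nth_pre_f_PNode_Cons(2) Cons.IH(1) by simp
    also have "\<dots> = Some (off + rank_in ?S (butlast x))"
    proof (cases "length y = 1")
      case True
      then have "butlast x = [0]" using 2 by (auto simp: length_Suc_conv)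
      then show ?thesis using True rank_in_verts_Cons(1)[of cs ts] by simp
    next
      case False
      then have "2 \<le> length y" using 2 Nil_notin_verts_f by (auto simp: two_le_length_iff)
      then have "butlast y \<in> ?C" "butlast x = 0 # butlast y"
        using 2 parent_closed_verts_f[of cs] by (auto simp: parent_closed_def)
      then show ?thesis using False rank_in_verts_Cons(2)[of "butlast y" cs ts] by simp
    qed
    finally show ?thesis using 2 Nil_notin_verts_f[of cs] by auto
  next
    case (3 w)
    have "pre_f off par (PNode cs # ts) ! (rank_in ?S x - 1)
        = (if length w = 1 then par else Some (off + Suc (card ?C) + rank_in ?T (butlast w)))"
      using 3 nth_pre_f_PNode_Cons(3) Cons.IH(2) by simp
    also have "\<dots> = (if length x = 1 then par else Some (off + rank_in ?S (butlast x)))"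
    proof (cases "length w = 1")
      case False
      then have "2 \<le> length w" using 3 Nil_notin_verts_f by (auto simp: two_le_length_iff)
      then have "butlast w \<in> ?T" using 3 parent_closed_verts_f[of ts] by (auto simp: parent_closed_def)
      then show ?thesis
        using 3 False rank_in_verts_Cons(3)[of "butlast w" ts cs] by (simp add: butlast_shiftp)
    qed (use 3 in simp)
    finally show ?thesis .
  qed
qed simp

text \<open>For vertex sets of forests (which do not contain the empty
  path) the top-level roots have no parent.\<close>
definition parent_in :: "nat list set \<Rightarrow> nat list \<Rightarrow> nat list option" where
  "parent_in A x = (if x \<noteq> [] \<and> butlast x \<in> A then Some (butlast x) else None)"

theorem iota_eq_oforest_on: "iota F = oforest_on (verts_f F) (parent_in (verts_f F))"
proof -
  let ?L = "pre_f 0 None F" and ?S = "verts_f F"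
  have len: "length ?L = card ?S" by (rule length_pre_f)
  show ?thesis unfolding iota_def Let_def
  proof (rule oforest_on_eqI[OF verts_finite(2) len])
    fix x assume x: "x \<in> ?S"
    have rank: "1 \<le> rank_in ?S x" "rank_in ?S x \<le> card ?S"
      using rank_in_nth[OF verts_finite(2) x] by simp_all
    have "length x = 1 \<or> 2 \<le> length x"
      using x Nil_notin_verts_f by (auto simp: two_le_length_iff)
    moreover have "length x = 1 \<Longrightarrow> butlast x = []" by (auto simp: length_Suc_conv)
    moreover have "2 \<le> length x \<Longrightarrow> butlast x \<in> ?S"
      using parent_closed_verts_f x by (simp add: parent_closed_def)
    ultimately show "(if 1 \<le> rank_in ?S x \<and> rank_in ?S x \<le> length ?L then ?L ! (rank_in ?S x - 1) else None)
        = map_option (rank_in ?S) (parent_in ?S x)"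
      using pre_f_parents[OF x, of 0 None] x rank len Nil_notin_verts_f
      by (auto simp: parent_in_def)
  qed auto
qed

section \<open>Isomorphisms of path sets\<close>

text \<open>Isomorphic path sets carry the same
  ordered forest; this is how Roo and Lea are compared with the induced ordered subforests.\<close>
definition path_iso :: "(nat list \<Rightarrow> nat list) \<Rightarrow> nat list set \<Rightarrow> nat list set \<Rightarrow> bool" where
  "path_iso e A B \<longleftrightarrow> strict_mono_on A e \<and> e ` A = B \<and>
     (\<forall>x\<in>A. parent_in B (e x) = map_option e (parent_in A x))"

definition iso_paths :: "nat list set \<Rightarrow> nat list set \<Rightarrow> bool" where
  "iso_paths A B \<longleftrightarrow> (\<exists>e. path_iso e A B)"

lemma parent_in_mem: "parent_in A x = Some a \<Longrightarrow> a \<in> A"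
  by (simp add: parent_in_def split: if_splits)

lemma oforest_on_iso_paths:
  assumes "finite A" "iso_paths A B"
  shows "oforest_on A (parent_in A) = oforest_on B (parent_in B)"
proof -
  obtain e where e: "path_iso e A B" using assms(2) by (auto simp: iso_paths_def)
  show ?thesis
    by (rule oforest_on_iso[symmetric, OF assms(1)]) (use e in \<open>auto simp: path_iso_def parent_in_mem\<close>)
qed

lemma iso_paths_refl: "iso_paths A A"
  unfolding iso_paths_def path_iso_def
  by (rule exI[of _ id]) (auto simp: option.map_id strict_mono_on_def monotone_on_def)

lemma iso_paths_trans:
  assumes "iso_paths A B" "iso_paths B C"
  shows "iso_paths A C"
proof -
  obtain f g where "path_iso f A B" "path_iso g B C" using assms by (auto simp: iso_paths_def)
  then have "path_iso (g \<circ> f) A C"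
    unfolding path_iso_def strict_mono_on_def monotone_on_def
    by (auto simp: image_comp[symmetric] option.map_comp)
  then show ?thesis by (auto simp: iso_paths_def)
qed

lemma iso_paths_sym:
  assumes "iso_paths A B"
  shows "iso_paths B A"
proof -
  obtain e where e: "path_iso e A B" using assms by (auto simp: iso_paths_def)
  then have mono: "strict_mono_on A e" and img: "e ` A = B"
    and par: "\<And>x. x \<in> A \<Longrightarrow> parent_in B (e x) = map_option e (parent_in A x)"
    by (auto simp: path_iso_def)
  let ?e' = "inv_into A e"
  have inv: "?e' (e x) = x" if "x \<in> A" for x
    using strict_mono_on_imp_inj_on[OF mono] that by simp
  have "path_iso ?e' B A"
    unfolding path_iso_def
  proof (intro conjI ballI strict_mono_onI)
    fix y z assume "y \<in> B" "z \<in> B" "y < z"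
    then obtain a b where "a \<in> A" "b \<in> A" "y = e a" "z = e b" "e a < e b" using img by blast
    then show "?e' y < ?e' z"
      using inv mono by (metis linorder_neqE order.asym strict_mono_onD)
  next
    show "?e' ` B = A" using img inv by force
  next
    fix y assume "y \<in> B"
    then obtain x where x: "x \<in> A" "y = e x" using img by blast
    then show "parent_in A (?e' y) = map_option ?e' (parent_in B y)"
      using par inv by (cases "parent_in A x") (auto simp: parent_in_mem option.map_comp)
  qed
  then show ?thesis by (auto simp: iso_paths_def)
qed

lemma iso_paths_Cons0: "iso_paths A (Cons 0 ` A)"
proof -
  have "parent_in (Cons 0 ` A) (0 # x) = map_option (Cons 0) (parent_in A x)" for x
    by (cases x) (auto simp: parent_in_def)
  then have "path_iso (Cons 0) A (Cons 0 ` A)"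
    by (auto simp: path_iso_def intro: strict_mono_onI)
  then show ?thesis by (auto simp: iso_paths_def)
qed

definition shift_head :: "(nat \<Rightarrow> nat) \<Rightarrow> nat list \<Rightarrow> nat list" where
  "shift_head f x = (case x of [] \<Rightarrow> [] | i # q \<Rightarrow> f i # q)"

lemma shift_head_simps [simp]: "shift_head f [] = []" "shift_head f (i # q) = f i # q"
  by (simp_all add: shift_head_def)

lemma shift_head_eq_Nil_iff [simp]: "shift_head f x = [] \<longleftrightarrow> x = []" "[] = shift_head f x \<longleftrightarrow> x = []"
  by (cases x; simp)+

lemma shiftp_eq_shift_head: "shiftp = shift_head Suc"
proof
  show "shiftp x = shift_head Suc x" for x by (cases x) auto
qed

lemma iso_paths_shift_head:
  assumes nil: "[] \<notin> A" and mono: "strict_mono_on (hd ` A) f"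
  shows "iso_paths A (shift_head f ` A)"
proof -
  have inj: "inj_on f (hd ` A)" using strict_mono_on_imp_inj_on[OF mono] .
  have butlast_shift: "butlast (shift_head f x) = shift_head f (butlast x)" for x
    by (cases x) auto
  have mem: "shift_head f (butlast x) \<in> shift_head f ` A \<longleftrightarrow> butlast x \<in> A" if "x \<in> A" for x
  proof
    assume "shift_head f (butlast x) \<in> shift_head f ` A"
    then obtain z where z: "z \<in> A" "shift_head f (butlast x) = shift_head f z" by blast
    then have "butlast x \<noteq> []" using nil by (cases z) auto
    then obtain i q where bx: "butlast x = i # q" by (cases "butlast x") auto
    then have "i = hd x" by (cases x) (auto split: if_splits)
    then have i: "i \<in> hd ` A" using that by blast
    obtain j r where jr: "z = j # r" using z nil by (cases z) auto
    then have "f i = f j" "q = r" "j \<in> hd ` A" using z bx by force+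
    then have "butlast x = z" using inj_onD[OF inj _ i] bx jr by simp
    then show "butlast x \<in> A" using z by simp
  qed auto
  have "path_iso (shift_head f) A (shift_head f ` A)"
    unfolding path_iso_def
  proof (intro conjI ballI strict_mono_onI)
    fix x y assume x: "x \<in> A" and y: "y \<in> A" and xy: "x < y"
    obtain a p b q where ab: "x = a # p" "y = b # q" using x y nil by (cases x; cases y) auto
    then have "a \<in> hd ` A" "b \<in> hd ` A" using x y by force+
    then have "a < b \<Longrightarrow> f a < f b" using mono by (simp add: strict_mono_onD)
    then show "shift_head f x < shift_head f y" using ab xy by auto
  next
    fix x assume x: "x \<in> A"
    then show "parent_in (shift_head f ` A) (shift_head f x) = map_option (shift_head f) (parent_in A x)"
      using mem[OF x] by (simp add: parent_in_def butlast_shift)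
  qed simp
  then show ?thesis by (auto simp: iso_paths_def)
qed

definition heads_below :: "nat list set \<Rightarrow> nat list set \<Rightarrow> bool" where
  "heads_below A B \<longleftrightarrow> [] \<notin> A \<and> [] \<notin> B \<and> (\<forall>a\<in>A. \<forall>b\<in>B. hd a < hd b)"

lemma heads_below_less:
  assumes "heads_below A B" "a \<in> A" "b \<in> B"
  shows "a < b"
proof -
  have "hd a < hd b" "a \<noteq> []" "b \<noteq> []" using assms by (auto simp: heads_below_def)
  then show ?thesis by (cases a; cases b) auto
qed

lemma parent_in_heads_below:
  assumes below: "heads_below A B"
  shows "x \<in> A \<Longrightarrow> parent_in (A \<union> B) x = parent_in A x"
    and "x \<in> B \<Longrightarrow> parent_in (A \<union> B) x = parent_in B x"
proof -
  have hd: "hd (butlast x) = hd x" if "butlast x \<in> A \<union> B" for x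
    using that below by (cases x) (auto simp: heads_below_def split: if_splits)
  have no_cross: "\<not> (x \<in> A \<and> butlast x \<in> B)" "\<not> (x \<in> B \<and> butlast x \<in> A)" for x
    using hd[of x] below unfolding heads_below_def by (metis Un_iff less_irrefl)+
  show "x \<in> A \<Longrightarrow> parent_in (A \<union> B) x = parent_in A x"
    and "x \<in> B \<Longrightarrow> parent_in (A \<union> B) x = parent_in B x"
    using no_cross[of x] by (auto simp: parent_in_def)
qed

lemma iso_paths_union:
  assumes AT: "iso_paths A T" and AT': "iso_paths A' T'"
    and below: "heads_below A A'" "heads_below T T'"
  shows "iso_paths (A \<union> A') (T \<union> T')"
proof -
  obtain e e' where e: "path_iso e A T" and e': "path_iso e' A' T'"
    using AT AT' by (auto simp: iso_paths_def)
  then have mono: "strict_mono_on A e" "strict_mono_on A' e'" and img: "e ` A = T" "e' ` A' = T'"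
    and par: "\<And>x. x \<in> A \<Longrightarrow> parent_in T (e x) = map_option e (parent_in A x)"
      "\<And>x. x \<in> A' \<Longrightarrow> parent_in T' (e' x) = map_option e' (parent_in A' x)"
    by (auto simp: path_iso_def)
  define g where "g x = (if x \<in> A then e x else e' x)" for x
  have g: "\<And>x. x \<in> A \<Longrightarrow> g x = e x" "\<And>x. x \<in> A' \<Longrightarrow> g x = e' x"
    using heads_below_less[OF below(1)] by (auto simp: g_def)
  have "path_iso g (A \<union> A') (T \<union> T')"
    unfolding path_iso_def
  proof (intro conjI ballI strict_mono_onI)
    fix x y assume x: "x \<in> A \<union> A'" and y: "y \<in> A \<union> A'" and xy: "x < y"
    have "\<not> (y \<in> A \<and> x \<in> A')" using heads_below_less[OF below(1)] xy by force
    moreover have "e x < e' y" if "x \<in> A" "y \<in> A'"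
      using heads_below_less[OF below(2)] img that by blast
    ultimately show "g x < g y"
      using x y xy mono g by (auto dest: strict_mono_onD)
  next
    show "g ` (A \<union> A') = T \<union> T'" using img g by (simp add: image_Un)
  next
    fix x assume "x \<in> A \<union> A'"
    then consider "x \<in> A" | "x \<in> A'" by blast
    then show "parent_in (T \<union> T') (g x) = map_option g (parent_in (A \<union> A') x)"
    proof cases
      case 1
      have "e x \<in> T" using img 1 by blast
      then have "parent_in (T \<union> T') (g x) = parent_in T (e x)"
        using g(1)[OF 1] parent_in_heads_below(1)[OF below(2)] by simp
      also have "\<dots> = map_option g (parent_in A x)"
        using par(1)[OF 1] g(1) parent_in_mem by (cases "parent_in A x") auto
      finally show ?thesis using parent_in_heads_below(1)[OF below(1) 1] by simp
    next
      case 2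
      have "e' x \<in> T'" using img 2 by blast
      then have "parent_in (T \<union> T') (g x) = parent_in T' (e' x)"
        using g(2)[OF 2] parent_in_heads_below(2)[OF below(2)] by simp
      also have "\<dots> = map_option g (parent_in A' x)"
        using par(2)[OF 2] g(2) parent_in_mem by (cases "parent_in A' x") auto
      finally show ?thesis using parent_in_heads_below(2)[OF below(1) 2] by simp
    qed
  qed
  then show ?thesis by (auto simp: iso_paths_def)
qed

text \<open>Adding the empty path as a common root.  Parent-closedness guarantees that an isomorphism
  maps top-level roots (paths of length 1) to top-level roots.\<close>
lemma iso_paths_insert_root:
  assumes AT: "iso_paths A T" and nil: "[] \<notin> A" "[] \<notin> T"
    and closed: "parent_closed A" "parent_closed T"
  shows "iso_paths (insert [] A) (insert [] T)"
proof -
  obtain e where e: "path_iso e A T" using AT by (auto simp: iso_paths_def)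
  then have img: "e ` A = T" and par: "\<And>x. x \<in> A \<Longrightarrow> parent_in T (e x) = map_option e (parent_in A x)"
    by (auto simp: path_iso_def)
  have root_iff: "parent_in B x = None \<longleftrightarrow> length x = 1" if "x \<in> B" "[] \<notin> B" "parent_closed B" for B x
    using that by (auto simp: parent_in_def parent_closed_def two_le_length_iff length_Suc_conv)
  have insert_root: "parent_in (insert [] B) x = (if length x = 1 then Some [] else parent_in B x)"
    if "x \<noteq> []" for B x
    using that unfolding parent_in_def by (cases x) auto
  have e_mem: "e x \<in> T" "e x \<noteq> []" if "x \<in> A" for x
  proof -
    show "e x \<in> T" using img that by blast
    then show "e x \<noteq> []" using nil(2) by metis
  qed
  define g where "g x = (if x = [] then [] else e x)" for x
  have "path_iso g (insert [] A) (insert [] T)"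
    unfolding path_iso_def
  proof (intro conjI ballI strict_mono_onI)
    fix x y assume "x \<in> insert [] A" "y \<in> insert [] A" "x < y"
    moreover have "strict_mono_on A e" using e by (simp add: path_iso_def)
    ultimately show "g x < g y" using e_mem by (auto simp: g_def Nil_less_iff dest: strict_mono_onD)
  next
    show "g ` insert [] A = insert [] T" using img nil by (auto simp: g_def intro!: image_cong)
  next
    fix x assume "x \<in> insert [] A"
    then consider "x = []" | "x \<in> A" "x \<noteq> []" using nil by blast
    then show "parent_in (insert [] T) (g x) = map_option g (parent_in (insert [] A) x)"
    proof cases
      case 2
      have ex: "e x \<in> T" "e x \<noteq> []" using e_mem[OF 2(1)] .
      have "length (e x) = 1 \<longleftrightarrow> length x = 1"
        using root_iff[OF ex(1) nil(2) closed(2)] root_iff[OF 2(1) nil(1) closed(1)] par[OF 2(1)] by simp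
      then show ?thesis
        using 2 ex par[OF 2(1)] nil
        by (cases "parent_in A x") (auto simp: g_def insert_root dest: parent_in_mem)
    qed (simp add: parent_in_def g_def)
  qed
  then show ?thesis by (auto simp: iso_paths_def)
qed

lemma iso_paths_shiftp: "[] \<notin> B \<Longrightarrow> iso_paths B (shiftp ` B)"
  unfolding shiftp_eq_shift_head by (intro iso_paths_shift_head) (auto intro: strict_mono_onI)

lemma heads_below_Cons0_shiftp:
  assumes "[] \<notin> B"
  shows "heads_below (Cons 0 ` A) (shiftp ` B)"
proof -
  have "0 < hd (shiftp b)" if "b \<in> B" for b using assms that by (cases b) auto
  then show ?thesis using assms by (auto simp: heads_below_def)
qed

lemma iso_paths_cons:
  assumes "iso_paths A T" "iso_paths A' T'" "[] \<notin> A'" "[] \<notin> T'"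
  shows "iso_paths (Cons 0 ` A \<union> shiftp ` A') (Cons 0 ` T \<union> shiftp ` T')"
proof (rule iso_paths_union)
  show "iso_paths (Cons 0 ` A) (Cons 0 ` T)"
    by (rule iso_paths_trans[OF iso_paths_sym[OF iso_paths_Cons0]
          iso_paths_trans[OF assms(1) iso_paths_Cons0]])
  show "iso_paths (shiftp ` A') (shiftp ` T')"
    by (rule iso_paths_trans[OF iso_paths_sym[OF iso_paths_shiftp[OF assms(3)]]
          iso_paths_trans[OF assms(2) iso_paths_shiftp[OF assms(4)]]])
  show "heads_below (Cons 0 ` A) (shiftp ` A')" "heads_below (Cons 0 ` T) (shiftp ` T')"
    using assms(3,4) by (simp_all add: heads_below_Cons0_shiftp)
qed

lemma verts_f_hd: "x \<in> verts_f G \<Longrightarrow> hd x < length G"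
proof (induction G arbitrary: x)
  case (Cons t G)
  from Cons.prems consider v where "x = 0 # v" | y where "y \<in> verts_f G" "x = shiftp y"
    by auto
  then show ?case
  proof cases
    case 2
    then obtain a q where "y = a # q" using Nil_notin_verts_f by (cases y) auto
    then show ?thesis using 2 Cons.IH by fastforce
  qed simp
qed simp

lemma verts_f_append:
  "verts_f (G1 @ G2) = verts_f G1 \<union> shift_head (\<lambda>i. i + length G1) ` verts_f G2"
proof (induction G1)
  case (Cons t G1)
  have "shiftp (shift_head (\<lambda>i. i + length G1) x) = shift_head (\<lambda>i. i + length (t # G1)) x" for x
    by (cases x) auto
  then show ?case using Cons by (auto simp: image_Un image_image)
next
  case Nil
  have "shift_head (\<lambda>i. i + 0) x = x" for x by (cases x) auto
  then show ?case by simp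
qed

lemma iso_paths_append:
  "iso_paths (verts_f (G1 @ G2)) (Cons 0 ` verts_f G1 \<union> shiftp ` verts_f G2)"
proof -
  let ?k = "length G1" and ?B = "verts_f G2"
  have nil: "[] \<notin> verts_f G1" "[] \<notin> ?B" by (simp_all add: Nil_notin_verts_f)
  have "iso_paths (shift_head (\<lambda>i. i + ?k) ` ?B) ?B"
  proof -
    have "iso_paths ?B (shift_head (\<lambda>i. i + ?k) ` ?B)"
      using nil(2) by (intro iso_paths_shift_head) (auto intro: strict_mono_onI)
    then show ?thesis by (rule iso_paths_sym)
  qed
  moreover have "iso_paths ?B (shiftp ` ?B)" using nil(2) by (rule iso_paths_shiftp)
  ultimately have second: "iso_paths (shift_head (\<lambda>i. i + ?k) ` ?B) (shiftp ` ?B)"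
    by (rule iso_paths_trans)
  have "hd a < hd (shift_head (\<lambda>i. i + ?k) z)" if "a \<in> verts_f G1" "z \<in> ?B" for a z
    using verts_f_hd[OF that(1)] nil(2) that(2) by (cases z) auto
  then have below: "heads_below (verts_f G1) (shift_head (\<lambda>i. i + ?k) ` ?B)"
    using nil by (auto simp: heads_below_def)
  have "heads_below (Cons 0 ` verts_f G1) (shiftp ` ?B)"
    using nil(2) by (rule heads_below_Cons0_shiftp)
  with iso_paths_union[OF iso_paths_Cons0 second below] show ?thesis
    by (simp only: verts_f_append)
qed

section \<open>The vertex sets of Roo and Lea\<close>

text \<open>The vertices of Lea_V F: the nonempty paths of V together with all their descendants.
  (Nonemptiness matters for the recursion, where the cut of a subforest may contain the root
  path [] of the enclosing tree.)\<close>
definition lea_set :: "nat list set \<Rightarrow> pforest \<Rightarrow> nat list set" where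
  "lea_set V F = {y \<in> verts_f F. \<exists>v\<in>V. v \<noteq> [] \<and> (\<exists>w. y = v @ w)}"

lemma lea_set_subset: "lea_set V F \<subseteq> verts_f F"
  by (auto simp: lea_set_def)

lemma Cons_in_lea_prefix_iff:
  "(\<exists>v\<in>V. v \<noteq> [] \<and> (\<exists>w. i # q = v @ w)) \<longleftrightarrow> (\<exists>p. i # p \<in> V \<and> (\<exists>w. q = p @ w))"
  by (auto simp: Cons_eq_append_conv)

lemma lea_set_Cons:
  "lea_set V (PNode cs # ts) =
     Cons 0 ` (if [] \<in> first_part V then insert [] (verts_f cs) else lea_set (first_part V) cs)
     \<union> shiftp ` lea_set (rest_part V) ts"
proof -
  have first: "0 # q \<in> lea_set V (PNode cs # ts) \<longleftrightarrow>
      q \<in> insert [] (verts_f cs) \<and> (\<exists>p\<in>first_part V. \<exists>w. q = p @ w)" for q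
    unfolding lea_set_def mem_Collect_eq Cons_in_lea_prefix_iff first_part_def by auto
  have first': "q \<in> insert [] (verts_f cs) \<and> (\<exists>p\<in>first_part V. \<exists>w. q = p @ w) \<longleftrightarrow>
      q \<in> (if [] \<in> first_part V then insert [] (verts_f cs) else lea_set (first_part V) cs)" for q
    by (auto simp: lea_set_def) (metis (full_types))
  have rest: "Suc j # q \<in> lea_set V (PNode cs # ts) \<longleftrightarrow> j # q \<in> lea_set (rest_part V) ts" for j q
    unfolding lea_set_def mem_Collect_eq Cons_in_lea_prefix_iff by (auto simp: rest_part_def)
  show ?thesis
  proof (intro set_eqI)
    fix y
    show "y \<in> lea_set V (PNode cs # ts) \<longleftrightarrow> y \<in> Cons 0 ` (if [] \<in> first_part V then insert [] (verts_f cs)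
        else lea_set (first_part V) cs) \<union> shiftp ` lea_set (rest_part V) ts"
    proof (cases y)
      case (Cons i q)
      then show ?thesis using first first' rest by (cases i) (auto simp: image_iff)
    qed (auto simp: lea_set_def)
  qed
qed

lemma Cons0_shiftp_diff:
  "(Cons 0 ` A \<union> shiftp ` B) - (Cons 0 ` C \<union> shiftp ` D) = Cons 0 ` (A - C) \<union> shiftp ` (B - D)"
  using inj_shiftp by (auto simp: image_iff inj_eq)

lemma parent_closed_roo_set: "parent_closed (verts_f F - lea_set V F)"
  unfolding parent_closed_def
proof (intro ballI impI)
  fix x assume x: "x \<in> verts_f F - lea_set V F" and len: "2 \<le> length x"
  then have "butlast x \<in> verts_f F" using parent_closed_verts_f by (auto simp: parent_closed_def)
  moreover have "butlast x \<notin> lea_set V F"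
  proof
    assume "butlast x \<in> lea_set V F"
    then obtain v w where "v \<in> V" "v \<noteq> []" "butlast x = v @ w" by (auto simp: lea_set_def)
    moreover have "x = butlast x @ [last x]" using len by (auto simp: two_le_length_iff)
    ultimately show False using x by (auto simp: lea_set_def)
  qed
  ultimately show "butlast x \<in> verts_f F - lea_set V F" by blast
qed

lemma iso_paths_roo: "iso_paths (verts_f (roo_f V F)) (verts_f F - lea_set V F)"
proof (induction F arbitrary: V rule: pforest_induct)
  case Nil
  then show ?case by (simp add: lea_set_def iso_paths_refl)
next
  case (Cons cs ts)
  let ?V1 = "first_part V" and ?V2 = "rest_part V"
  let ?R1 = "verts_f cs - lea_set ?V1 cs" and ?R2 = "verts_f ts - lea_set ?V2 ts"
  have nil: "[] \<notin> ?R1" "[] \<notin> ?R2" "[] \<notin> verts_f (roo_f ?V2 ts)"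
    by (simp_all add: Nil_notin_verts_f)
  show ?case
  proof (cases "[] \<in> ?V1")
    case True
    then have "verts_f (PNode cs # ts) - lea_set V (PNode cs # ts) = shiftp ` ?R2"
      unfolding lea_set_Cons verts_f_PNode_Cons Cons0_shiftp_diff by simp
    moreover have "roo_f V (PNode cs # ts) = roo_f ?V2 ts" using True by simp
    ultimately show ?thesis
      using iso_paths_trans[OF Cons.IH(2) iso_paths_shiftp[OF nil(2)]] by simp
  next
    case False
    then have "verts_f (PNode cs # ts) - lea_set V (PNode cs # ts) = Cons 0 ` insert [] ?R1 \<union> shiftp ` ?R2"
      using lea_set_subset[of ?V1 cs] Nil_notin_verts_f[of cs]
      unfolding lea_set_Cons verts_f_PNode_Cons Cons0_shiftp_diff by (auto simp: insert_Diff_if)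
    moreover have "verts_f (roo_f V (PNode cs # ts)) =
        Cons 0 ` insert [] (verts_f (roo_f ?V1 cs)) \<union> shiftp ` verts_f (roo_f ?V2 ts)"
      using False by simp
    moreover have "iso_paths (insert [] (verts_f (roo_f ?V1 cs))) (insert [] ?R1)"
      by (rule iso_paths_insert_root[OF Cons.IH(1)])
        (simp_all add: Nil_notin_verts_f parent_closed_verts_f parent_closed_roo_set)
    ultimately show ?thesis using iso_paths_cons[OF _ Cons.IH(2) nil(3,2)] by presburger
  qed
qed

lemma iso_paths_lea: "iso_paths (verts_f (lea_f V F)) (lea_set V F)"
proof (induction F arbitrary: V rule: pforest_induct)
  case Nil
  then show ?case by (simp add: lea_set_def iso_paths_refl)
next
  case (Cons cs ts)
  let ?V1 = "first_part V" and ?V2 = "rest_part V"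
  have nil: "[] \<notin> lea_set ?V2 ts" "[] \<notin> verts_f (lea_f ?V2 ts)"
    using lea_set_subset Nil_notin_verts_f by blast+
  show ?case
  proof (cases "[] \<in> ?V1")
    case True
    then have "verts_f (lea_f V (PNode cs # ts)) =
        Cons 0 ` insert [] (verts_f cs) \<union> shiftp ` verts_f (lea_f ?V2 ts)"
      "lea_set V (PNode cs # ts) = Cons 0 ` insert [] (verts_f cs) \<union> shiftp ` lea_set ?V2 ts"
      unfolding lea_set_Cons by simp_all
    then show ?thesis using iso_paths_cons[OF iso_paths_refl Cons.IH(2) nil(2,1)] by presburger
  next
    case False
    then show ?thesis
      using iso_paths_trans[OF iso_paths_append iso_paths_cons[OF Cons.IH(1) Cons.IH(2) nil(2,1)]]
      by (simp add: lea_set_Cons)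
  qed
qed

section \<open>iota maps the coproduct of H_NCK to the coproduct of H_o\<close>

lemma trancl_parent_pairs_paths:
  assumes nil: "[] \<notin> S" and closed: "parent_closed S"
  shows "(parent_pairs S (parent_in S))\<^sup>+ = {(u, v). u \<in> S \<and> v \<in> S \<and> (\<exists>w. w \<noteq> [] \<and> v = u @ w)}"
    (is "?R\<^sup>+ = ?P")
proof
  show "?R\<^sup>+ \<subseteq> ?P"
  proof (clarify)
    fix u v assume "(u, v) \<in> ?R\<^sup>+"
    then show "u \<in> S \<and> v \<in> S \<and> (\<exists>w. w \<noteq> [] \<and> v = u @ w)"
    proof (induction rule: trancl_induct)
      case (base v)
      then show ?case by (auto simp: parent_pairs_def parent_in_def split: if_splits intro!: exI[of _ "[last v]"])
    next
      case (step v z)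
      then have "v = butlast z" "z \<noteq> []" "z \<in> S" by (auto simp: parent_pairs_def parent_in_def split: if_splits)
      then show ?case using step.IH by (metis append_assoc append_butlast_last_id append_is_Nil_conv)
    qed
  qed
next
  show "?P \<subseteq> ?R\<^sup>+"
  proof (clarify)
    fix u w assume u: "u \<in> S" and w: "w \<noteq> []" and uw: "u @ w \<in> S"
    from w uw show "(u, u @ w) \<in> ?R\<^sup>+"
    proof (induction w rule: rev_induct)
      case (snoc c w)
      have bl: "butlast (u @ w @ [c]) = u @ w" by (metis append_assoc butlast_snoc)
      have "u @ w \<in> S"
      proof (cases "w = []")
        case False
        then have "2 \<le> length (u @ w @ [c])" using u nil by (cases u) auto
        then show ?thesis using closed snoc.prems bl by (auto simp: parent_closed_def)
      qed (use u in simp)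
      then have step: "(u @ w, u @ w @ [c]) \<in> ?R" using snoc.prems bl
        by (auto simp: parent_pairs_def parent_in_def)
      show ?case
      proof (cases "w = []")
        case False
        then show ?thesis using snoc.IH[OF False \<open>u @ w \<in> S\<close>] step by (auto intro: trancl_into_trancl)
      qed (use step in auto)
    qed simp
  qed
qed

lemma fst_iota: "fst (iota F) = card (verts_f F)"
  by (simp add: iota_eq_oforest_on)

text \<open>iota F is a well-formed ordered forest, since parents precede children lexicographically.\<close>
lemma wf_iota: "wf_oforest (iota F)"
  unfolding iota_eq_oforest_on
proof (rule wf_oforest_on[OF verts_finite(2)])
  fix x a assume "x \<in> verts_f F" "parent_in (verts_f F) x = Some a"
  then have "a \<in> verts_f F" "x = a @ [last x]" by (auto simp: parent_in_def split: if_splits)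
  then show "a \<in> verts_f F \<and> a < x" using prefix_less[of "[last x]" a] by simp
qed

lemma trancl_parent_rel_iota:
  "(parent_rel (snd (iota F)))\<^sup>+ = map_prod (rank_in (verts_f F)) (rank_in (verts_f F)) `
     {(u, v). u \<in> verts_f F \<and> v \<in> verts_f F \<and> (\<exists>w. w \<noteq> [] \<and> v = u @ w)}"
proof -
  let ?S = "verts_f F" and ?r = "rank_in (verts_f F)"
  have fin: "finite ?S" by (rule verts_finite)
  have "parent_rel (snd (iota F)) = map_prod ?r ?r ` parent_pairs ?S (parent_in ?S)"
    unfolding iota_eq_oforest_on by (rule parent_rel_oforest_on[OF fin parent_in_mem])
  also have "(\<dots>)\<^sup>+ = map_prod ?r ?r ` (parent_pairs ?S (parent_in ?S))\<^sup>+"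
    by (rule trancl_map_prod_inj[OF rank_in_inj[OF fin]])
      (auto simp: parent_pairs_def dest: parent_in_mem)
  also have "(parent_pairs ?S (parent_in ?S))\<^sup>+ = {(u, v). u \<in> ?S \<and> v \<in> ?S \<and> (\<exists>w. w \<noteq> [] \<and> v = u @ w)}"
    by (rule trancl_parent_pairs_paths[OF Nil_notin_verts_f parent_closed_verts_f])
  finally show ?thesis .
qed

lemma ancestor_iota_iff:
  assumes "u \<in> verts_f F" "v \<in> verts_f F"
  shows "(rank_in (verts_f F) u, rank_in (verts_f F) v) \<in> (parent_rel (snd (iota F)))\<^sup>+
     \<longleftrightarrow> (\<exists>w. w \<noteq> [] \<and> v = u @ w)"
proof
  have inj: "inj_on (rank_in (verts_f F)) (verts_f F)" by (rule rank_in_inj[OF verts_finite(2)])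
  assume "(rank_in (verts_f F) u, rank_in (verts_f F) v) \<in> (parent_rel (snd (iota F)))\<^sup>+"
  then obtain x y where xy: "rank_in (verts_f F) u = rank_in (verts_f F) x"
    "rank_in (verts_f F) v = rank_in (verts_f F) y" "x \<in> verts_f F" "y \<in> verts_f F"
    "\<exists>w. w \<noteq> [] \<and> y = x @ w"
    unfolding trancl_parent_rel_iota by auto
  then have "x = u" "y = v" using inj_onD[OF inj] assms by metis+
  then show "\<exists>w. w \<noteq> [] \<and> v = u @ w" using xy(5) by simp
next
  assume "\<exists>w. w \<noteq> [] \<and> v = u @ w"
  then have "(u, v) \<in> {(u, v). u \<in> verts_f F \<and> v \<in> verts_f F \<and> (\<exists>w. w \<noteq> [] \<and> v = u @ w)}"
    using assms by blast
  then show "(rank_in (verts_f F) u, rank_in (verts_f F) v) \<in> (parent_rel (snd (iota F)))\<^sup>+"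
    unfolding trancl_parent_rel_iota by (rule rev_image_eqI) simp
qed

lemma oadm_cuts_iota: "oadm_cuts (iota F) = (\<lambda>V. rank_in (verts_f F) ` V) ` padm_cuts F"
proof -
  let ?S = "verts_f F" and ?r = "rank_in (verts_f F)" and ?P = "parent_rel (snd (iota F))"
  have fin: "finite ?S" by (rule verts_finite)
  have img: "?r ` ?S = {1..card ?S}" by (rule rank_in_image[OF fin])
  have oadm: "oadm_cuts (iota F) = {W. W \<subseteq> {1..card ?S} \<and> (\<forall>a\<in>W. \<forall>b\<in>W. (a, b) \<notin> ?P\<^sup>+)}"
    using fst_iota[of F] by (cases "iota F") (simp add: oadm_cuts_def)
  have antichain: "(\<forall>a\<in>?r ` V. \<forall>b\<in>?r ` V. (a, b) \<notin> ?P\<^sup>+) \<longleftrightarrow>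
      (\<forall>u\<in>V. \<forall>v\<in>V. u \<noteq> v \<longrightarrow> \<not> (\<exists>w. v = u @ w))" if "V \<subseteq> ?S" for V
  proof -
    have "(\<forall>a\<in>?r ` V. \<forall>b\<in>?r ` V. (a, b) \<notin> ?P\<^sup>+) \<longleftrightarrow>
        (\<forall>u\<in>V. \<forall>v\<in>V. \<not> (\<exists>w. w \<noteq> [] \<and> v = u @ w))"
      using ancestor_iota_iff that by (simp add: subset_iff)
    also have "\<dots> \<longleftrightarrow> (\<forall>u\<in>V. \<forall>v\<in>V. u \<noteq> v \<longrightarrow> \<not> (\<exists>w. v = u @ w))"
      by (metis append.right_neutral append_self_conv)
    finally show ?thesis .
  qed
  show ?thesis
  proof (intro set_eqI iffI)
    fix W assume "W \<in> oadm_cuts (iota F)"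
    then have W: "W \<subseteq> ?r ` ?S" "\<forall>a\<in>W. \<forall>b\<in>W. (a, b) \<notin> ?P\<^sup>+" using oadm img by auto
    define V where "V = {x \<in> ?S. ?r x \<in> W}"
    have "W = ?r ` V" "V \<subseteq> ?S" using W(1) by (auto simp: V_def)
    then show "W \<in> (\<lambda>V. ?r ` V) ` padm_cuts F"
      using W(2) antichain by (auto simp: padm_cuts_def)
  next
    fix W assume "W \<in> (\<lambda>V. ?r ` V) ` padm_cuts F"
    then obtain V where V: "W = ?r ` V" "V \<subseteq> ?S" "\<forall>u\<in>V. \<forall>v\<in>V. u \<noteq> v \<longrightarrow> \<not> (\<exists>w. v = u @ w)"
      by (auto simp: padm_cuts_def)
    moreover have "?r ` V \<subseteq> {1..card ?S}" using img V(2) by blast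
    ultimately show "W \<in> oadm_cuts (iota F)" using oadm antichain[of V] by simp
  qed
qed

lemma olea_set_iota:
  assumes VS: "V \<subseteq> verts_f F"
  shows "olea_set (iota F) (rank_in (verts_f F) ` V) = rank_in (verts_f F) ` lea_set V F"
proof -
  let ?S = "verts_f F" and ?r = "rank_in (verts_f F)" and ?P = "parent_rel (snd (iota F))"
  have fin: "finite ?S" by (rule verts_finite)
  have inj: "inj_on ?r ?S" by (rule rank_in_inj[OF fin])
  have olea: "olea_set (iota F) (?r ` V) = {x \<in> ?r ` ?S. \<exists>v\<in>?r ` V. (v, x) \<in> ?P\<^sup>*}"
    using fst_iota[of F] rank_in_image[OF fin] by (cases "iota F") (simp add: olea_set_def)
  have reach: "(?r v, ?r y) \<in> ?P\<^sup>* \<longleftrightarrow> (\<exists>w. y = v @ w)" if "v \<in> ?S" "y \<in> ?S" for v y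
  proof -
    have "(?r v, ?r y) \<in> ?P\<^sup>* \<longleftrightarrow> ?r v = ?r y \<or> (?r v, ?r y) \<in> ?P\<^sup>+"
      by (auto simp: rtrancl_eq_or_trancl)
    also have "\<dots> \<longleftrightarrow> v = y \<or> (\<exists>w. w \<noteq> [] \<and> y = v @ w)"
      using ancestor_iota_iff[OF that] inj that by (auto dest: inj_onD)
    also have "\<dots> \<longleftrightarrow> (\<exists>w. y = v @ w)" by auto
    finally show ?thesis .
  qed
  have lea: "y \<in> lea_set V F \<longleftrightarrow> (\<exists>v\<in>V. (?r v, ?r y) \<in> ?P\<^sup>*)" if "y \<in> ?S" for y
  proof -
    have "y \<in> lea_set V F \<longleftrightarrow> (\<exists>v\<in>V. \<exists>w. y = v @ w)"
    proof
      assume "\<exists>v\<in>V. \<exists>w. y = v @ w"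
      then obtain v w where "v \<in> V" "y = v @ w" by blast
      moreover have "v \<noteq> []" using \<open>v \<in> V\<close> VS Nil_notin_verts_f by blast
      ultimately show "y \<in> lea_set V F" using that by (auto simp: lea_set_def)
    qed (auto simp: lea_set_def)
    also have "\<dots> \<longleftrightarrow> (\<exists>v\<in>V. (?r v, ?r y) \<in> ?P\<^sup>*)"
      by (rule bex_cong[OF refl]) (use reach[OF _ that] VS in blast)
    finally show ?thesis .
  qed
  show ?thesis
  proof (intro set_eqI iffI)
    fix x assume "x \<in> olea_set (iota F) (?r ` V)"
    then obtain y where "y \<in> ?S" "x = ?r y" "\<exists>v\<in>V. (?r v, ?r y) \<in> ?P\<^sup>*" unfolding olea by blast
    then show "x \<in> ?r ` lea_set V F" using lea by blast
  next
    fix x assume "x \<in> ?r ` lea_set V F"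
    then obtain y where "y \<in> lea_set V F" "x = ?r y" by blast
    moreover have "y \<in> ?S" using \<open>y \<in> lea_set V F\<close> lea_set_subset by blast
    ultimately show "x \<in> olea_set (iota F) (?r ` V)" unfolding olea using lea by blast
  qed
qed

lemma orestrict_iota:
  assumes T: "T \<subseteq> verts_f F" and iso: "iso_paths (verts_f G) T"
  shows "orestrict (rank_in (verts_f F) ` T) (iota F) = iota G"
proof -
  have "restrict_parent T (parent_in (verts_f F)) = parent_in T"
    using T by (auto simp: restrict_parent_def parent_in_def fun_eq_iff)
  then have "orestrict (rank_in (verts_f F) ` T) (iota F) = oforest_on T (parent_in T)"
    unfolding iota_eq_oforest_on by (simp add: orestrict_oforest_on[OF verts_finite(2) T parent_in_mem])
  also have "\<dots> = iota G"
    unfolding iota_eq_oforest_on by (rule oforest_on_iso_paths[OF verts_finite(2) iso, symmetric])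
  finally show ?thesis .
qed

theorem ocop_iota: "ocop (iota F) = image_mset (map_prod iota iota) (pcop F)"
proof -
  let ?S = "verts_f F" and ?r = "rank_in (verts_f F)"
  let ?cut = "\<lambda>W. (orestrict ({1..fst (iota F)} - olea_set (iota F) W) (iota F),
                   orestrict (olea_set (iota F) W) (iota F))"
  have fin: "finite ?S" by (rule verts_finite)
  have inj: "inj_on ?r ?S" by (rule rank_in_inj[OF fin])
  have inj_cuts: "inj_on (\<lambda>V. ?r ` V) (padm_cuts F)"
    using inj by (auto intro!: inj_onI simp: padm_cuts_def inj_on_image_eq_iff)
  have fin_cuts: "finite (padm_cuts F)"
    using fin by (auto intro: finite_subset[of _ "Pow ?S"] simp: padm_cuts_def)
  have cut: "?cut (?r ` V) = (iota (roo_f V F), iota (lea_f V F))" if "V \<in> padm_cuts F" for V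
  proof -
    have VS: "V \<subseteq> ?S" using that by (simp add: padm_cuts_def)
    have "{1..fst (iota F)} - olea_set (iota F) (?r ` V) = ?r ` ?S - ?r ` lea_set V F"
      by (simp add: olea_set_iota[OF VS] fst_iota rank_in_image[OF fin])
    also have "\<dots> = ?r ` (?S - lea_set V F)"
      using inj lea_set_subset by (simp add: inj_on_image_set_diff)
    finally show ?thesis
      using orestrict_iota[OF Diff_subset iso_paths_roo] orestrict_iota[OF lea_set_subset iso_paths_lea]
      by (simp add: olea_set_iota[OF VS])
  qed
  have "ocop (iota F) = image_mset (?cut \<circ> (\<lambda>V. ?r ` V)) (mset_set (padm_cuts F))"
    unfolding ocop_def oadm_cuts_iota image_mset_mset_set[OF inj_cuts, symmetric] multiset.map_comp ..
  also have "\<dots> = image_mset (\<lambda>V. (iota (roo_f V F), iota (lea_f V F))) (mset_set (padm_cuts F))"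
    using cut fin_cuts by (intro image_mset_cong) simp
  also have "\<dots> = image_mset (map_prod iota iota) (pcop F)"
    unfolding pcop_def multiset.map_comp by (simp add: comp_def)
  finally show ?thesis .
qed

section \<open>iota is injective and multiplicative\<close>

definition entry_above :: "nat \<Rightarrow> nat option \<Rightarrow> bool" where
  "entry_above off e \<longleftrightarrow> (\<exists>x. e = Some x \<and> off < x)"

lemma set_pre_f: "set (pre_f off par F) \<subseteq> insert par {e. entry_above off e}"
proof (induction F arbitrary: off par rule: pforest_induct)
  case (Cons cs ts)
  have "set (pre_f (Suc off) (Some (Suc off)) cs) \<subseteq> {e. entry_above off e}"
    using Cons.IH(1)[of "Suc off" "Some (Suc off)"] by (auto simp: entry_above_def)
  moreover have "set (pre_f off' par ts) \<subseteq> insert par {e. entry_above off e}" if "off \<le> off'" for off'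
    using Cons.IH(2)[of off' par] that by (auto simp: entry_above_def)
  ultimately show ?case by auto
qed simp

lemma pre_f_eq_Nil_iff: "pre_f off par F = [] \<longleftrightarrow> F = []"
proof (cases F)
  case (Cons t ts)
  then show ?thesis by (cases t) simp
qed simp

lemma hd_pre_f: "F \<noteq> [] \<Longrightarrow> hd (pre_f off par F) = par"
proof (cases F)
  case (Cons t ts)
  then show ?thesis by (cases t) simp
qed simp

text \<open>A parent list determines the forest: the block of the first tree consists of the entries
  entry_above off following the root entry par.\<close>
lemma pre_f_inj:
  assumes "\<not> entry_above off par" "pre_f off par F = pre_f off par G"
  shows "F = G"
  using assms
proof (induction F arbitrary: G off par rule: pforest_induct)
  case Nil
  then show ?case by (metis pre_f.simps(1) pre_f_eq_Nil_iff)
next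
  case (Cons cs ts)
  obtain cs' ts' where G: "G = PNode cs' # ts'"
    using Cons.prems(2) pre_f_eq_Nil_iff by (metis list.exhaust ptree.exhaust)
  let ?X = "\<lambda>cs. pre_f (Suc off) (Some (Suc off)) cs"
  let ?Y = "\<lambda>cs ts. pre_f (Suc (off + length (?X cs))) par ts"
  have block: "takeWhile (entry_above off) (?X cs @ ?Y cs ts) = ?X cs" for cs ts
  proof -
    have "\<forall>e\<in>set (?X cs). entry_above off e"
      using set_pre_f[of "Suc off" "Some (Suc off)" cs] by (auto simp: entry_above_def)
    moreover have "takeWhile (entry_above off) (?Y cs ts) = []"
      using hd_pre_f[of ts] Cons.prems(1) by (cases "ts = []") (simp_all add: takeWhile_eq_Nil_iff pre_f_eq_Nil_iff)
    ultimately show ?thesis by (simp add: takeWhile_append2)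
  qed
  have eq: "?X cs @ ?Y cs ts = ?X cs' @ ?Y cs' ts'" using Cons.prems(2) G by simp
  then have "?X cs = ?X cs'" using block by metis
  moreover have "\<not> entry_above (Suc off) (Some (Suc off))" by (simp add: entry_above_def)
  ultimately have "cs = cs'" using Cons.IH(1) by blast
  moreover have "\<not> entry_above (Suc (off + length (?X cs))) par" using Cons.prems(1) by (auto simp: entry_above_def)
  ultimately have "ts = ts'" using Cons.IH(2) eq by simp
  then show ?case using G \<open>cs = cs'\<close> by simp
qed

theorem inj_iota: "inj iota"
proof (rule injI)
  fix F G assume eq: "iota F = iota G"
  let ?L = "pre_f 0 None F" and ?M = "pre_f 0 None G"
  have len: "length ?L = length ?M" using eq unfolding iota_def Let_def by simp
  have "?L = ?M"
  proof (rule nth_equalityI[OF len])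
    fix k assume "k < length ?L"
    moreover have "snd (iota F) (Suc k) = snd (iota G) (Suc k)" using eq by simp
    ultimately show "?L ! k = ?M ! k" using len unfolding iota_def Let_def by simp
  qed
  then show "F = G" by (rule pre_f_inj[rotated]) (simp add: entry_above_def)
qed

lemma pre_f_shift:
  "pre_f (off + k) (map_option (\<lambda>a. a + k) par) F = map (map_option (\<lambda>a. a + k)) (pre_f off par F)"
proof (induction F arbitrary: off par rule: pforest_induct)
  case (Cons cs ts)
  let ?n = "Suc (off + length (pre_f (Suc off) (Some (Suc off)) cs))"
  show ?case
    using Cons.IH(1)[of "Suc off" "Some (Suc off)"] Cons.IH(2)[of ?n par] by (simp add: ac_simps)
qed simp

lemma pre_f_append:
  "pre_f off par (F @ G) = pre_f off par F @ pre_f (off + length (pre_f off par F)) par G"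
  by (induction F arbitrary: off) (auto simp: ac_simps)

theorem iota_append: "iota (F @ G) = oprod (iota F) (iota G)"
proof -
  let ?L = "pre_f 0 None F" and ?M = "pre_f 0 None G"
  have "pre_f (length ?L) None G = map (map_option (\<lambda>a. a + length ?L)) ?M"
    using pre_f_shift[of 0 "length ?L" None G] by simp
  then have "pre_f 0 None (F @ G) = ?L @ map (map_option (\<lambda>a. a + length ?L)) ?M"
    by (simp add: pre_f_append)
  then show ?thesis
    unfolding iota_def Let_def oprod_def by (auto simp: fun_eq_iff nth_append)
qed

lemma iota_Nil: "iota [] = oempty"
  by (auto simp: iota_def oempty_def)

text \<open>iota_lin is the linear extension of the injective map iota of bases; the Hopf algebra
  structure maps are linear extensions of their values on basis elements, on which iota is
  compatible with them (iota_append, iota_Nil, ocop_iota).\<close>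
theorem mainTheorem5:
  shows "(\<forall>x \<in> (H_NCK :: (pforest \<Rightarrow> 'k::field) set). iota_lin x \<in> H_o)
    \<and> inj_on (iota_lin :: (pforest \<Rightarrow> 'k::field) \<Rightarrow> _) H_NCK
    \<and> (\<forall>x \<in> (H_NCK :: (pforest \<Rightarrow> 'k::field) set). \<forall>y \<in> H_NCK.
          iota_lin (mult_NCK x y) = mult_o (iota_lin x) (iota_lin y))
    \<and> iota_lin (unit_NCK :: pforest \<Rightarrow> 'k::field) = unit_o
    \<and> (\<forall>x \<in> (H_NCK :: (pforest \<Rightarrow> 'k::field) set).
          cop_o (iota_lin x) = iota_tensor (cop_NCK x))
    \<and> (\<forall>x \<in> (H_NCK :: (pforest \<Rightarrow> 'k::field) set).
          counit_o (iota_lin x) = counit_NCK x)"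
proof (intro conjI ballI)
  fix x :: "pforest \<Rightarrow> 'k" assume "x \<in> H_NCK"
  then have "lin_ext iota x \<in> free_mod" by (simp add: H_NCK_def lin_ext_free_mod[OF inj_iota])
  moreover have "\<forall>F\<in>fsupp (lin_ext iota x). wf_oforest F"
    unfolding fsupp_lin_ext[OF inj_iota] using wf_iota by blast
  ultimately show "iota_lin x \<in> H_o" by (simp add: H_o_def iota_lin_def)
next
  show "inj_on (iota_lin :: (pforest \<Rightarrow> 'k) \<Rightarrow> _) H_NCK"
    unfolding iota_lin_def using inj_lin_ext[OF inj_iota] by (rule inj_on_subset) simp
next
  fix x y :: "pforest \<Rightarrow> 'k"
  show "iota_lin (mult_NCK x y) = mult_o (iota_lin x) (iota_lin y)"
    unfolding iota_lin_def mult_NCK_def mult_o_def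
    by (rule lin_ext_bilin_ext[OF inj_iota]) (rule iota_append)
next
  show "iota_lin (unit_NCK :: pforest \<Rightarrow> 'k) = unit_o"
    unfolding iota_lin_def unit_NCK_def unit_o_def lin_ext_basis_vec[OF inj_iota] iota_Nil ..
next
  fix x :: "pforest \<Rightarrow> 'k"
  show "cop_o (iota_lin x) = iota_tensor (cop_NCK x)"
    unfolding cop_o_def iota_lin_def iota_tensor_def cop_NCK_def
    by (rule lin_ext_cop_ext[OF inj_iota]) (rule ocop_iota)
  show "counit_o (iota_lin x) = counit_NCK x"
    unfolding counit_o_def counit_NCK_def iota_lin_def iota_Nil[symmetric] lin_ext_at[OF inj_iota] ..
qed

end
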